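(* Let $U,V$ be Hopf algebras with bijective antipodes, $\langle\,,\rangle:U\otimes V\to k$ a pairing, and let $\gamma:V\to U^{\rm cop}$ be a Hopf algebra map satisfying $\gamma(y)m=\langle S_U^{-1}(m_1),y_3\rangle\langle m_3,y_1\rangle\, m_2\gamma(y_2)$ for all $y\in V$, $m\in U$. Then: (i) The functional $\vartheta\in V^*$, $\vartheta(x)=\langle\gamma(x_1),S_V(x_2)\rangle$, is convolution invertible with inverse $\vartheta^{-1}(x)=\langle\gamma(S_V^2(x_1)),x_2\rangle$, and for all $x\in V$, $\gamma(S_V^2(x))=\vartheta^{-1}(x_1)\gamma(x_2)\vartheta(x_3)$. (ii) The functional $\upsilon\in V^*$, $\upsilon(x)=\langle\gamma(x_2),S_V(x_1)\rangle$, is convolution invertible with inverse $\upsilon^{-1}(x)=\langle\gamma(S_V^2(x_2)),x_1\rangle$, and for all $x\in V$, $\gamma(S_V^2(x))=\upsilon(x_1)\gamma(x_2)\upsilon^{-1}(x_3)$.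
   Context: Sweedler notation, subscripts referring to comultiplication in $U$ and $V$. A pairing satisfies $\langle mn,x\rangle=\langle m,x_1\rangle\langle n,x_2\rangle$, $\langle m,xy\rangle=\langle m_1,x\rangle\langle m_2,y\rangle$, $\langle 1,x\rangle=\varepsilon(x)$, $\langle m,1\rangle=\varepsilon(m)$. $U^{\rm cop}$ denotes $U$ with opposite comultiplication (antipode $S_U^{-1}$); products $\gamma(\cdot)\gamma(\cdot)$ are taken in $U$. *)

theory Defs
  imports Main
begin

text \<open>
Algebras over a field k are modelled as types of class ring_1 (so 0 is not 1)
together with a scalar action sm :: 'k => 'a => 'a.  The comultiplication
Delta(x) = sum_i a_i (x) b_i is represented by a finite list of pairs (a_i, b_i).
Equality of elements of A (x) A (resp. A (x) A (x) A) is tested against all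
products of linear functionals A -> k, which separate points of tensor products
of vector spaces over a field.
\<close>

definition k_algebra :: "('k::field \<Rightarrow> 'a::ring_1 \<Rightarrow> 'a) \<Rightarrow> bool" where
  "k_algebra sm \<longleftrightarrow>
     (\<forall>c x y. sm c (x + y) = sm c x + sm c y) \<and>
     (\<forall>c d x. sm (c + d) x = sm c x + sm d x) \<and>
     (\<forall>c d x. sm (c * d) x = sm c (sm d x)) \<and>
     (\<forall>x. sm 1 x = x) \<and>
     (\<forall>c x y. sm c (x * y) = sm c x * y) \<and>
     (\<forall>c x y. sm c (x * y) = x * sm c y)"

definition lin_map :: "('k::field \<Rightarrow> 'a::ring_1 \<Rightarrow> 'a) \<Rightarrow> ('k \<Rightarrow> 'b::ring_1 \<Rightarrow> 'b) \<Rightarrow> ('a \<Rightarrow> 'b) \<Rightarrow> bool" where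
  "lin_map sa sb f \<longleftrightarrow> (\<forall>x y. f (x + y) = f x + f y) \<and> (\<forall>c x. f (sa c x) = sb c (f x))"

definition lin_fun :: "('k::field \<Rightarrow> 'a::ring_1 \<Rightarrow> 'a) \<Rightarrow> ('a \<Rightarrow> 'k) \<Rightarrow> bool" where
  "lin_fun sa f \<longleftrightarrow> (\<forall>x y. f (x + y) = f x + f y) \<and> (\<forall>c x. f (sa c x) = c * f x)"

definition tensor2_eq :: "('k::field \<Rightarrow> 'a::ring_1 \<Rightarrow> 'a) \<Rightarrow> ('a \<times> 'a) list \<Rightarrow> ('a \<times> 'a) list \<Rightarrow> bool" where
  "tensor2_eq sa L1 L2 \<longleftrightarrow> (\<forall>f g. lin_fun sa f \<longrightarrow> lin_fun sa g \<longrightarrow>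
      sum_list (map (\<lambda>(a, b). f a * g b) L1) = sum_list (map (\<lambda>(a, b). f a * g b) L2))"

definition tensor3_eq :: "('k::field \<Rightarrow> 'a::ring_1 \<Rightarrow> 'a) \<Rightarrow> ('a \<times> 'a \<times> 'a) list \<Rightarrow> ('a \<times> 'a \<times> 'a) list \<Rightarrow> bool" where
  "tensor3_eq sa L1 L2 \<longleftrightarrow> (\<forall>f g h. lin_fun sa f \<longrightarrow> lin_fun sa g \<longrightarrow> lin_fun sa h \<longrightarrow>
      sum_list (map (\<lambda>(a, b, c). f a * g b * h c) L1) = sum_list (map (\<lambda>(a, b, c). f a * g b * h c) L2))"

text \<open>(id (x) Delta) Delta, i.e. Sweedler x_1 (x) x_2 (x) x_3.\<close>
definition delta3 :: "('a \<Rightarrow> ('a \<times> 'a) list) \<Rightarrow> 'a \<Rightarrow> ('a \<times> 'a \<times> 'a) list" where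
  "delta3 \<Delta> x = concat (map (\<lambda>(a, b). map (\<lambda>(c, d). (a, c, d)) (\<Delta> b)) (\<Delta> x))"

definition delta3' :: "('a \<Rightarrow> ('a \<times> 'a) list) \<Rightarrow> 'a \<Rightarrow> ('a \<times> 'a \<times> 'a) list" where
  "delta3' \<Delta> x = concat (map (\<lambda>(a, b). map (\<lambda>(c, d). (c, d, b)) (\<Delta> a)) (\<Delta> x))"

definition hopf_algebra ::
  "('k::field \<Rightarrow> 'a::ring_1 \<Rightarrow> 'a) \<Rightarrow> ('a \<Rightarrow> ('a \<times> 'a) list) \<Rightarrow> ('a \<Rightarrow> 'k) \<Rightarrow> ('a \<Rightarrow> 'a) \<Rightarrow> bool" where
  "hopf_algebra sm \<Delta> \<epsilon> S \<longleftrightarrow>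
     k_algebra sm \<and>
     \<comment> \<open>comultiplication is linear\<close>
     (\<forall>x y. tensor2_eq sm (\<Delta> (x + y)) (\<Delta> x @ \<Delta> y)) \<and>
     (\<forall>c x. tensor2_eq sm (\<Delta> (sm c x)) (map (\<lambda>(a, b). (sm c a, b)) (\<Delta> x))) \<and>
     \<comment> \<open>coassociativity\<close>
     (\<forall>x. tensor3_eq sm (delta3 \<Delta> x) (delta3' \<Delta> x)) \<and>
     \<comment> \<open>counit\<close>
     lin_fun sm \<epsilon> \<and>
     (\<forall>x. sum_list (map (\<lambda>(a, b). sm (\<epsilon> a) b) (\<Delta> x)) = x) \<and>
     (\<forall>x. sum_list (map (\<lambda>(a, b). sm (\<epsilon> b) a) (\<Delta> x)) = x) \<and>
     \<comment> \<open>Delta and epsilon are algebra maps\<close>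
     (\<forall>x y. tensor2_eq sm (\<Delta> (x * y)) (concat (map (\<lambda>(a, b). map (\<lambda>(c, d). (a * c, b * d)) (\<Delta> y)) (\<Delta> x)))) \<and>
     tensor2_eq sm (\<Delta> 1) [(1, 1)] \<and>
     (\<forall>x y. \<epsilon> (x * y) = \<epsilon> x * \<epsilon> y) \<and> \<epsilon> 1 = 1 \<and>
     \<comment> \<open>antipode\<close>
     lin_map sm sm S \<and>
     (\<forall>x. sum_list (map (\<lambda>(a, b). S a * b) (\<Delta> x)) = sm (\<epsilon> x) 1) \<and>
     (\<forall>x. sum_list (map (\<lambda>(a, b). a * S b) (\<Delta> x)) = sm (\<epsilon> x) 1)"

definition hopf_pairing ::
  "('k::field \<Rightarrow> 'u::ring_1 \<Rightarrow> 'u) \<Rightarrow> ('u \<Rightarrow> ('u \<times> 'u) list) \<Rightarrow> ('u \<Rightarrow> 'k) \<Rightarrow>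
   ('k \<Rightarrow> 'v::ring_1 \<Rightarrow> 'v) \<Rightarrow> ('v \<Rightarrow> ('v \<times> 'v) list) \<Rightarrow> ('v \<Rightarrow> 'k) \<Rightarrow>
   ('u \<Rightarrow> 'v \<Rightarrow> 'k) \<Rightarrow> bool" where
  "hopf_pairing smU \<Delta>U \<epsilon>U smV \<Delta>V \<epsilon>V p \<longleftrightarrow>
     (\<forall>x. lin_fun smU (\<lambda>m. p m x)) \<and> (\<forall>m. lin_fun smV (\<lambda>x. p m x)) \<and>
     (\<forall>m n x. p (m * n) x = sum_list (map (\<lambda>(a, b). p m a * p n b) (\<Delta>V x))) \<and>
     (\<forall>m x y. p m (x * y) = sum_list (map (\<lambda>(a, b). p a x * p b y) (\<Delta>U m))) \<and>
     (\<forall>x. p 1 x = \<epsilon>V x) \<and> (\<forall>m. p m 1 = \<epsilon>U m)"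

text \<open>Hopf algebra map V -> U^cop (bialgebra map; compatibility with antipodes is automatic).\<close>
definition hopf_map_cop ::
  "('k::field \<Rightarrow> 'u::ring_1 \<Rightarrow> 'u) \<Rightarrow> ('u \<Rightarrow> ('u \<times> 'u) list) \<Rightarrow> ('u \<Rightarrow> 'k) \<Rightarrow>
   ('k \<Rightarrow> 'v::ring_1 \<Rightarrow> 'v) \<Rightarrow> ('v \<Rightarrow> ('v \<times> 'v) list) \<Rightarrow> ('v \<Rightarrow> 'k) \<Rightarrow>
   ('v \<Rightarrow> 'u) \<Rightarrow> bool" where
  "hopf_map_cop smU \<Delta>U \<epsilon>U smV \<Delta>V \<epsilon>V \<gamma> \<longleftrightarrow>
     lin_map smV smU \<gamma> \<and>
     (\<forall>x y. \<gamma> (x * y) = \<gamma> x * \<gamma> y) \<and> \<gamma> 1 = 1 \<and>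
     (\<forall>y. tensor2_eq smU (\<Delta>U (\<gamma> y)) (map (\<lambda>(a, b). (\<gamma> b, \<gamma> a)) (\<Delta>V y))) \<and>
     (\<forall>y. \<epsilon>U (\<gamma> y) = \<epsilon>V y)"

definition conv :: "('a \<Rightarrow> ('a \<times> 'a) list) \<Rightarrow> ('a \<Rightarrow> 'k::field) \<Rightarrow> ('a \<Rightarrow> 'k) \<Rightarrow> 'a \<Rightarrow> 'k" where
  "conv \<Delta> f g x = sum_list (map (\<lambda>(a, b). f a * g b) (\<Delta> x))"

end

(*
  Equalities in U are tested against all linear functionals and equalities of tensors against
  products of functionals, so every Sweedler-notation computation becomes an identity between
  finite sums of scalars, manipulated with coassociativity, the counit and the antipode.

  Specialising the commutation relation to m = \<gamma>(z) and cancelling the S_U^-1 factor against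
  the pairing gives the exchange rule
    \<gamma>(y_(1)) \<gamma>(z_(1)) <\<gamma>(z_(2)), y_(2)> = <\<gamma>(z_(1)), y_(1)> \<gamma>(z_(2)) \<gamma>(y_(2)).
  Used with y = S_V(x), it shows h(\<gamma>(x_(1))) \<vartheta>(x_(2)) = \<vartheta>(x_(1)) h(\<gamma>(S_V^2(x_(2)))) for every
  functional h on U; taking h = <-, y> yields \<vartheta> * \<vartheta>^-1 = \<epsilon>.  A one-sided convolution inverse
  is two-sided because V is locally finite: x lies in the finite-dimensional space of all
  x_(1) f(x_(2)), on which the left action of the inverse is injective, hence bijective.
  Convolving the exchange identity with \<vartheta>^-1 gives \<gamma>(S_V^2(x)) = \<vartheta>^-1(x_(1)) \<gamma>(x_(2)) \<vartheta>(x_(3)).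
  Part (ii) is the mirror image, with \<upsilon> in place of \<vartheta>.
*)

theory Submission
  imports Defs "HOL.Vector_Spaces"
begin

lemma lin_fun_add: "lin_fun sm f \<Longrightarrow> f (x + y) = f x + f y"
  by (simp add: lin_fun_def)

lemma lin_fun_scale: "lin_fun sm f \<Longrightarrow> f (sm c x) = c * f x"
  by (simp add: lin_fun_def)

lemma lin_fun_zero: "lin_fun sm f \<Longrightarrow> f 0 = 0"
  using lin_fun_add[of sm f 0 0] by (metis add_0 add_cancel_right_right)

lemma lin_fun_diff: "lin_fun sm f \<Longrightarrow> f (x - y) = f x - f y"
  using lin_fun_add[of sm f "x - y" y] by (simp add: algebra_simps)

lemma lin_fun_sum_list: "lin_fun sm f \<Longrightarrow> f (sum_list (map g xs)) = sum_list (map (\<lambda>x. f (g x)) xs)"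
  by (induction xs) (auto simp: lin_fun_zero lin_fun_add)

lemma lin_fun_sum: "lin_fun sm f \<Longrightarrow> f (sum g A) = sum (\<lambda>x. f (g x)) A"
  by (induction A rule: infinite_finite_induct) (auto simp: lin_fun_zero lin_fun_add)

lemma lin_fun_const_mult: "lin_fun sm f \<Longrightarrow> lin_fun sm (\<lambda>x. c * f x)"
  by (simp add: lin_fun_def algebra_simps)

lemma lin_fun_mult_const: "lin_fun sm f \<Longrightarrow> lin_fun sm (\<lambda>x. f x * c)"
  by (simp add: lin_fun_def algebra_simps)

lemma lin_fun_plus: "lin_fun sm f \<Longrightarrow> lin_fun sm g \<Longrightarrow> lin_fun sm (\<lambda>x. f x + g x)"
  by (simp add: lin_fun_def algebra_simps)

lemma lin_fun_sum_list_fun: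
  "(\<And>y. y \<in> set ys \<Longrightarrow> lin_fun sm (\<lambda>x. G x y)) \<Longrightarrow> lin_fun sm (\<lambda>x. sum_list (map (G x) ys))"
  by (induction ys) (auto simp: lin_fun_def distrib_left)

lemma lin_fun_comp: "lin_map sa sb g \<Longrightarrow> lin_fun sb f \<Longrightarrow> lin_fun sa (\<lambda>x. f (g x))"
  by (simp add: lin_fun_def lin_map_def)

lemma lin_map_add: "lin_map sa sb f \<Longrightarrow> f (x + y) = f x + f y"
  by (simp add: lin_map_def)

lemma lin_map_scale: "lin_map sa sb f \<Longrightarrow> f (sa c x) = sb c (f x)"
  by (simp add: lin_map_def)

lemma lin_map_zero: "lin_map sa sb f \<Longrightarrow> f 0 = 0"
  using lin_map_add[of sa sb f 0 0] by (metis add_0 add_cancel_right_right)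

lemma lin_map_sum_list: "lin_map sa sb f \<Longrightarrow> f (sum_list (map g xs)) = sum_list (map (\<lambda>x. f (g x)) xs)"
  by (induction xs) (auto simp: lin_map_zero lin_map_add)

lemma lin_map_inv:
  assumes "bij f" and "lin_map sa sb f"
  shows "lin_map sb sa (inv f)"
proof -
  have "inv f (x + y) = inv f x + inv f y" for x y
    by (rule bij_is_inj[OF assms(1), THEN injD])
      (simp add: lin_map_add[OF assms(2)] bij_is_surj[OF assms(1), THEN surj_f_inv_f])
  moreover have "inv f (sb c x) = sa c (inv f x)" for c x
    by (rule bij_is_inj[OF assms(1), THEN injD])
      (simp add: lin_map_scale[OF assms(2)] bij_is_surj[OF assms(1), THEN surj_f_inv_f])
  ultimately show ?thesis by (simp add: lin_map_def)
qed

lemma sum_list_map_concat: "sum_list (map f (concat xss)) = sum_list (map (\<lambda>xs. sum_list (map f xs)) xss)"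
  by (induction xss) auto

lemma sum_list_swap:
  fixes f :: "'a \<Rightarrow> 'b \<Rightarrow> 'c::comm_monoid_add"
  shows "sum_list (map (\<lambda>x. sum_list (map (\<lambda>y. f x y) ys)) xs) =
    sum_list (map (\<lambda>y. sum_list (map (\<lambda>x. f x y) xs)) ys)"
  by (induction xs) (auto simp: sum_list_addf)

lemma sum_list_sum_swap:
  "sum_list (map (\<lambda>x. \<Sum>e\<in>E. f x e) xs) = (\<Sum>e\<in>E. sum_list (map (\<lambda>x. f x e) xs))"
  by (induction xs) (auto simp: sum.distrib)

definition lin_fun2 :: "('k::field \<Rightarrow> 'a::ring_1 \<Rightarrow> 'a) \<Rightarrow> ('a \<Rightarrow> 'a \<Rightarrow> 'k) \<Rightarrow> bool" where
  "lin_fun2 sm B \<longleftrightarrow> (\<forall>b. lin_fun sm (\<lambda>a. B a b)) \<and> (\<forall>a. lin_fun sm (\<lambda>b. B a b))"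

definition lin_fun3 :: "('k::field \<Rightarrow> 'a::ring_1 \<Rightarrow> 'a) \<Rightarrow> ('a \<Rightarrow> 'a \<Rightarrow> 'a \<Rightarrow> 'k) \<Rightarrow> bool" where
  "lin_fun3 sm B \<longleftrightarrow> (\<forall>b c. lin_fun sm (\<lambda>a. B a b c)) \<and> (\<forall>a c. lin_fun sm (\<lambda>b. B a b c)) \<and>
     (\<forall>a b. lin_fun sm (\<lambda>c. B a b c))"

lemma lin_fun2_simps:
  assumes "lin_fun2 sm B"
  shows "B (x + y) b = B x b + B y b" "B (sm c x) b = c * B x b"
    "B a (x + y) = B a x + B a y" "B a (sm c x) = c * B a x"
  using assms by (simp_all add: lin_fun2_def lin_fun_def)

lemma vector_space_field: "vector_space ((*) :: 'k::field \<Rightarrow> 'k \<Rightarrow> 'k)"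
  by unfold_locales (simp_all add: algebra_simps)

locale k_alg =
  fixes sm :: "'k::field \<Rightarrow> 'a::ring_1 \<Rightarrow> 'a"
  assumes k_algebra: "k_algebra sm"
begin

lemma sm_add: "sm c (x + y) = sm c x + sm c y"
  using k_algebra by (simp add: k_algebra_def)
lemma sm_add_left: "sm (c + d) x = sm c x + sm d x"
  using k_algebra by (simp add: k_algebra_def)
lemma sm_sm: "sm c (sm d x) = sm (c * d) x"
  using k_algebra by (simp add: k_algebra_def)
lemma sm_one [simp]: "sm 1 x = x"
  using k_algebra by (simp add: k_algebra_def)
lemma sm_mult_left: "sm c x * y = sm c (x * y)"
  using k_algebra unfolding k_algebra_def by metis
lemma sm_mult_right: "x * sm c y = sm c (x * y)"
  using k_algebra unfolding k_algebra_def by metis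

sublocale vs: vector_space sm
  by unfold_locales (simp_all add: sm_add sm_add_left sm_sm)

lemma sm_sum_list: "sm c (sum_list (map g xs)) = sum_list (map (\<lambda>x. sm c (g x)) xs)"
  by (induction xs) (auto simp: sm_add)

lemma span_sum_list: "(\<And>x. x \<in> set xs \<Longrightarrow> g x \<in> vs.span S) \<Longrightarrow> sum_list (map g xs) \<in> vs.span S"
  by (induction xs) (auto intro: vs.span_add vs.span_zero)

lemma lin_fun_iff_linear: "lin_fun sm f \<longleftrightarrow> Vector_Spaces.linear sm (*) f"
  by (simp add: lin_fun_def Vector_Spaces.linear_iff vs.vector_space_axioms vector_space_field)

lemma finite_coordinates:
  assumes "finite A"
  obtains E coord where "finite E" "\<And>e. lin_fun sm (coord e)"
    "\<And>a. a \<in> A \<Longrightarrow> (\<Sum>e\<in>E. sm (coord e a) e) = a"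
proof -
  interpret vk: vector_space_pair sm "(*) :: 'k \<Rightarrow> 'k \<Rightarrow> 'k"
    by (simp add: vector_space_pair_def vs.vector_space_axioms vector_space_field)
  interpret vv: vector_space_pair sm sm ..
  obtain E where E: "E \<subseteq> A" "vs.independent E" "A \<subseteq> vs.span E"
    using vs.maximal_independent_subset by blast
  have "\<forall>e. \<exists>g. Vector_Spaces.linear sm (*) g \<and> (\<forall>x\<in>E. g x = (if x = e then 1 else 0))"
    using vk.linear_independent_extend[OF E(2)] by fast
  then obtain coord where coord: "\<And>e. Vector_Spaces.linear sm (*) (coord e)"
    "\<And>e x. x \<in> E \<Longrightarrow> coord e x = (if x = e then 1 else 0)"
    by metis
  have fin: "finite E" using E(1) assms by (rule finite_subset)
  have "(\<Sum>e\<in>E. sm (coord e a) e) = a" if "a \<in> A" for a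
  proof (rule vv.linear_eq_on[where g = "\<lambda>a. a" and f = "\<lambda>a. \<Sum>e\<in>E. sm (coord e a) e" and B = E])
    show "Vector_Spaces.linear sm sm (\<lambda>a. \<Sum>e\<in>E. sm (coord e a) e)"
      by (intro vv.linear_compose_sum ballI vv.linear_compose_scale coord)
    show "a \<in> vs.span E" using that E(3) by blast
    show "(\<Sum>e\<in>E. sm (coord e b) e) = b" if "b \<in> E" for b
    proof -
      have "(\<Sum>e\<in>E. sm (coord e b) e) = (\<Sum>e\<in>E. if b = e then e else 0)"
        using that by (intro sum.cong) (auto simp: coord(2))
      with that fin show ?thesis by simp
    qed
  qed (rule vs.linear_ident)
  with fin coord(1) show thesis
    by (intro that) (auto simp: lin_fun_iff_linear)
qed

lemma lin_fun_separating:
  assumes "\<And>f. lin_fun sm f \<Longrightarrow> f u = f v"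
  shows "u = v"
proof -
  obtain E coord where coord: "\<And>e. lin_fun sm (coord e)"
    and expand: "(\<Sum>e\<in>E. sm (coord e (u - v)) e) = u - v"
    by (rule finite_coordinates[of "{u - v}"]) auto
  have "coord e (u - v) = 0" for e
    using assms[OF coord] by (simp add: lin_fun_diff[OF coord])
  with expand show "u = v" by simp
qed

lemma sum_list_coordinate_expansion:
  fixes L :: "('a \<times> 'r) list"
  assumes coords: "\<And>a. a \<in> fst ` set L \<Longrightarrow> (\<Sum>e\<in>E. sm (coord e a) e) = a"
    and lin: "\<And>r. lin_fun sm (\<lambda>a. B a r)"
  shows "sum_list (map (\<lambda>(a, r). B a r) L) = (\<Sum>e\<in>E. sum_list (map (\<lambda>(a, r). coord e a * B e r) L))"
proof -
  have "B a r = (\<Sum>e\<in>E. coord e a * B e r)" if "(a, r) \<in> set L" for a r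
  proof -
    have "a \<in> fst ` set L" using that by force
    then have "B a r = B (\<Sum>e\<in>E. sm (coord e a) e) r" by (simp only: coords)
    also have "\<dots> = (\<Sum>e\<in>E. coord e a * B e r)" by (simp add: lin_fun_sum[OF lin] lin_fun_scale[OF lin])
    finally show ?thesis .
  qed
  then have "sum_list (map (\<lambda>(a, r). B a r) L) = sum_list (map (\<lambda>(a, r). \<Sum>e\<in>E. coord e a * B e r) L)"
    by (intro arg_cong[where f = sum_list] map_cong) auto
  then show ?thesis by (simp add: case_prod_unfold sum_list_sum_swap)
qed


lemma tensor2_eq_lin_fun2:
  assumes eq: "tensor2_eq sm L1 L2" and B: "lin_fun2 sm B"
  shows "sum_list (map (\<lambda>(a, b). B a b) L1) = sum_list (map (\<lambda>(a, b). B a b) L2)"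
proof -
  obtain E coord where coord: "\<And>e. lin_fun sm (coord e)"
    and expand: "\<And>a. a \<in> fst ` set (L1 @ L2) \<Longrightarrow> (\<Sum>e\<in>E. sm (coord e a) e) = a"
    by (rule finite_coordinates[of "fst ` set (L1 @ L2)"]) auto
  have lin: "\<And>b. lin_fun sm (\<lambda>a. B a b)" "\<And>a. lin_fun sm (B a)"
    using B by (auto simp: lin_fun2_def)
  have "sum_list (map (\<lambda>(a, b). B a b) L1) = (\<Sum>e\<in>E. sum_list (map (\<lambda>(a, b). coord e a * B e b) L1))"
    by (rule sum_list_coordinate_expansion) (use expand lin in auto)
  also have "\<dots> = (\<Sum>e\<in>E. sum_list (map (\<lambda>(a, b). coord e a * B e b) L2))"
    using eq coord lin(2) by (simp add: tensor2_eq_def)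
  also have "\<dots> = sum_list (map (\<lambda>(a, b). B a b) L2)"
    by (rule sum_list_coordinate_expansion[symmetric]) (use expand lin in auto)
  finally show ?thesis .
qed


lemma tensor3_eq_lin_fun3:
  assumes eq: "tensor3_eq sm L1 L2" and B: "lin_fun3 sm B"
  shows "sum_list (map (\<lambda>(a, b, c). B a b c) L1) = sum_list (map (\<lambda>(a, b, c). B a b c) L2)"
proof -
  obtain E coord where coord: "\<And>e. lin_fun sm (coord e)"
    and expand: "\<And>a. a \<in> fst ` set (L1 @ L2) \<Longrightarrow> (\<Sum>e\<in>E. sm (coord e a) e) = a"
    by (rule finite_coordinates[of "fst ` set (L1 @ L2)"]) auto
  have lin: "\<And>b c. lin_fun sm (\<lambda>a. B a b c)" "\<And>a. lin_fun2 sm (B a)"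
    using B by (auto simp: lin_fun3_def lin_fun2_def)
  define absorb where "absorb e L = map (\<lambda>(a, b, c). (sm (coord e a) b, c)) (L :: ('a \<times> 'a \<times> 'a) list)" for e L
  have absorb: "sum_list (map (\<lambda>(a, b, c). coord e a * G b c) L) = sum_list (map (\<lambda>(b, c). G b c) (absorb e L))"
    if "\<And>c. lin_fun sm (\<lambda>b. G b c)" for e G L
    by (simp add: absorb_def case_prod_unfold comp_def lin_fun_scale[OF that])
  have "tensor2_eq sm (absorb e L1) (absorb e L2)" for e
    unfolding tensor2_eq_def
  proof (intro allI impI)
    fix f g assume f: "lin_fun sm f" and g: "lin_fun sm g"
    have "sum_list (map (\<lambda>(a, b, c). coord e a * (f b * g c)) L1) = sum_list (map (\<lambda>(a, b, c).
        coord e a * (f b * g c)) L2)"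
      using eq coord[of e] f g by (simp add: tensor3_eq_def mult.assoc)
    then show "sum_list (map (\<lambda>(b, c). f b * g c) (absorb e L1)) =
        sum_list (map (\<lambda>(b, c). f b * g c) (absorb e L2))"
      using f by (simp add: absorb lin_fun_mult_const)
  qed
  then have "sum_list (map (\<lambda>(a, b, c). coord e a * B e b c) L1) = sum_list (map (\<lambda>(a, b, c).
      coord e a * B e b c) L2)" for e
    using lin(2)[of e] by (simp add: absorb lin_fun2_def tensor2_eq_lin_fun2)
  moreover have "sum_list (map (\<lambda>(a, b, c). B a b c) L) = (\<Sum>e\<in>E. sum_list (map (\<lambda>(a, b, c).
      coord e a * B e b c) L))"
    if "set L \<subseteq> set (L1 @ L2)" for L
    using sum_list_coordinate_expansion[where L = L and E = E and coord = coord and B = "\<lambda>a (b, c). B a b c"]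
      that expand lin(1)
    by (auto simp: case_prod_unfold)
  ultimately show ?thesis by simp
qed

lemma inj_linear_image_finite_subspace:
  assumes lin: "Vector_Spaces.linear sm sm B" and "inj B"
    and N: "vs.subspace N" "N \<subseteq> vs.span P" "finite P" and invariant: "B ` N \<subseteq> N"
  shows "B ` N = N"
proof -
  interpret vv: vector_space_pair sm sm ..
  obtain E where E: "E \<subseteq> N" "vs.independent E" "N \<subseteq> vs.span E"
    using vs.maximal_independent_subset[of N] by blast
  have fin: "finite E"
    using vs.independent_span_bound[OF N(3) E(2)] E(1) N(2) by blast
  have inj_E: "inj_on B E"
    using \<open>inj B\<close> by (rule inj_on_subset) simp
  have indep: "vs.independent (B ` E)"
    by (rule vv.linear_independent_injective_image[OF lin E(2)]) (rule inj_on_subset[OF \<open>inj B\<close>], simp)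
  have "N \<subseteq> vs.span (B ` E)"
  proof
    fix u assume "u \<in> N"
    show "u \<in> vs.span (B ` E)"
    proof (rule ccontr)
      assume u: "u \<notin> vs.span (B ` E)"
      then have "vs.independent (insert u (B ` E))"
        using indep by (simp add: vs.independent_insert)
      moreover have "insert u (B ` E) \<subseteq> vs.span E"
        using \<open>u \<in> N\<close> E invariant by blast
      ultimately have "card (insert u (B ` E)) \<le> card E"
        using vs.independent_span_bound[OF fin] by blast
      moreover have "u \<notin> B ` E"
        using u vs.span_base by blast
      ultimately show False
        using fin card_image[OF inj_E] by simp
    qed
  qed
  also have "vs.span (B ` E) = B ` vs.span E"
    by (rule vv.linear_span_image[OF lin])
  also have "\<dots> \<subseteq> B ` N"
    using E(1) N(1) by (simp add: image_mono vs.span_minimal)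
  finally show ?thesis using invariant by blast
qed

end

locale hopf =
  fixes sm :: "'k::field \<Rightarrow> 'a::ring_1 \<Rightarrow> 'a" and \<Delta> :: "'a \<Rightarrow> ('a \<times> 'a) list"
    and \<epsilon> :: "'a \<Rightarrow> 'k" and S :: "'a \<Rightarrow> 'a"
  assumes hopf_algebra: "hopf_algebra sm \<Delta> \<epsilon> S"
begin

sublocale k_alg sm
  using hopf_algebra by unfold_locales (simp add: hopf_algebra_def)

lemma coprod_add: "tensor2_eq sm (\<Delta> (x + y)) (\<Delta> x @ \<Delta> y)"
  using hopf_algebra by (simp add: hopf_algebra_def)
lemma coprod_scale: "tensor2_eq sm (\<Delta> (sm c x)) (map (\<lambda>(a, b). (sm c a, b)) (\<Delta> x))"
  using hopf_algebra by (simp add: hopf_algebra_def)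
lemma coassoc: "tensor3_eq sm (delta3 \<Delta> x) (delta3' \<Delta> x)"
  using hopf_algebra by (simp add: hopf_algebra_def)
lemma lin_fun_counit: "lin_fun sm \<epsilon>"
  using hopf_algebra by (simp add: hopf_algebra_def)
lemma counit_left: "sum_list (map (\<lambda>(a, b). sm (\<epsilon> a) b) (\<Delta> x)) = x"
  using hopf_algebra by (simp add: hopf_algebra_def)
lemma counit_right: "sum_list (map (\<lambda>(a, b). sm (\<epsilon> b) a) (\<Delta> x)) = x"
  using hopf_algebra by (simp add: hopf_algebra_def)
lemma coprod_mult:
  "tensor2_eq sm (\<Delta> (x * y)) (concat (map (\<lambda>(a, b). map (\<lambda>(c, d). (a * c, b * d)) (\<Delta> y)) (\<Delta> x)))"
  using hopf_algebra by (simp add: hopf_algebra_def)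
lemma coprod_one: "tensor2_eq sm (\<Delta> 1) [(1, 1)]"
  using hopf_algebra by (simp add: hopf_algebra_def)
lemma counit_mult: "\<epsilon> (x * y) = \<epsilon> x * \<epsilon> y"
  using hopf_algebra by (simp add: hopf_algebra_def)
lemma counit_one: "\<epsilon> 1 = 1"
  using hopf_algebra by (simp add: hopf_algebra_def)
lemma lin_map_antipode: "lin_map sm sm S"
  using hopf_algebra by (simp add: hopf_algebra_def)
lemma antipode_left: "sum_list (map (\<lambda>(a, b). S a * b) (\<Delta> x)) = sm (\<epsilon> x) 1"
  using hopf_algebra by (simp add: hopf_algebra_def)
lemma antipode_right: "sum_list (map (\<lambda>(a, b). a * S b) (\<Delta> x)) = sm (\<epsilon> x) 1"
  using hopf_algebra by (simp add: hopf_algebra_def)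

lemmas counit_add = lin_fun_add[OF lin_fun_counit]
  and counit_scale = lin_fun_scale[OF lin_fun_counit]
  and antipode_add = lin_map_add[OF lin_map_antipode]
  and antipode_scale = lin_map_scale[OF lin_map_antipode]

(* In Sweedler notation, sweedler x B = B(x_(1), x_(2)) and sweedler_iter n x F = F [x_(1), ..., x_(n+1)]. *)

definition sweedler :: "'a \<Rightarrow> ('a \<Rightarrow> 'a \<Rightarrow> 'k) \<Rightarrow> 'k" where
  "sweedler x B = sum_list (map (\<lambda>(a, b). B a b) (\<Delta> x))"

lemma sweedler_const_mult: "sweedler x (\<lambda>a b. c * F a b) = c * sweedler x F"
  by (simp add: sweedler_def sum_list_const_mult case_prod_unfold)

lemma sweedler_mult_const: "sweedler x (\<lambda>a b. F a b * c) = sweedler x F * c"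
  by (simp add: sweedler_def sum_list_mult_const case_prod_unfold)

lemma sweedler_plus: "sweedler x (\<lambda>a b. F a b + G a b) = sweedler x F + sweedler x G"
  by (simp add: sweedler_def sum_list_addf case_prod_unfold)

lemma sweedler_swap:
  "sweedler x (\<lambda>a b. sweedler y (\<lambda>c d. G a b c d)) = sweedler y (\<lambda>c d. sweedler x (\<lambda>a b. G a b c d))"
  unfolding sweedler_def case_prod_unfold by (rule sum_list_swap)

lemma sweedler_add: "lin_fun2 sm B \<Longrightarrow> sweedler (x + y) B = sweedler x B + sweedler y B"
  unfolding sweedler_def using tensor2_eq_lin_fun2[OF coprod_add] by simp

lemma sweedler_scale: "lin_fun2 sm B \<Longrightarrow> sweedler (sm c x) B = c * sweedler x B"
  unfolding sweedler_def using tensor2_eq_lin_fun2[OF coprod_scale]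
  by (simp add: lin_fun2_simps case_prod_unfold comp_def sum_list_const_mult)

lemma lin_fun_sweedler: "lin_fun2 sm B \<Longrightarrow> lin_fun sm (\<lambda>x. sweedler x B)"
  by (simp add: lin_fun_def sweedler_add sweedler_scale)

lemma lin_fun_sweedler_fun: "(\<And>a b. lin_fun sm (\<lambda>v. B v a b)) \<Longrightarrow> lin_fun sm (\<lambda>v. sweedler x (B v))"
  unfolding sweedler_def by (rule lin_fun_sum_list_fun) (auto simp: case_prod_unfold)

lemma sweedler_mult:
  "lin_fun2 sm B \<Longrightarrow> sweedler (x * y) B = sweedler x (\<lambda>a b. sweedler y (\<lambda>c d. B (a * c) (b * d)))"
  unfolding sweedler_def using tensor2_eq_lin_fun2[OF coprod_mult]
  by (simp add: sum_list_map_concat comp_def case_prod_unfold)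

lemma sweedler_one: "lin_fun2 sm B \<Longrightarrow> sweedler 1 B = B 1 1"
  unfolding sweedler_def using tensor2_eq_lin_fun2[OF coprod_one] by simp

lemma sweedler_coassoc:
  "lin_fun3 sm G \<Longrightarrow> sweedler x (\<lambda>a b. sweedler b (\<lambda>c d. G a c d)) = sweedler x (\<lambda>a b. sweedler a (\<lambda>c d. G c d b))"
  using tensor3_eq_lin_fun3[OF coassoc]
  by (simp add: sweedler_def delta3_def delta3'_def sum_list_map_concat comp_def case_prod_unfold)

lemma sweedler_counit_left: "lin_fun sm f \<Longrightarrow> sweedler x (\<lambda>a b. \<epsilon> a * f b) = f x"
  using arg_cong[OF counit_left, of f]
  by (simp add: sweedler_def lin_fun_sum_list lin_fun_scale case_prod_unfold)

lemma sweedler_counit_right: "lin_fun sm f \<Longrightarrow> sweedler x (\<lambda>a b. f a * \<epsilon> b) = f x"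
  using arg_cong[OF counit_right, of f]
  by (simp add: sweedler_def lin_fun_sum_list lin_fun_scale case_prod_unfold mult.commute)

lemma sweedler_antipode_left: "lin_fun sm f \<Longrightarrow> sweedler x (\<lambda>a b. f (S a * b)) = \<epsilon> x * f 1"
  using arg_cong[OF antipode_left, of f]
  by (simp add: sweedler_def lin_fun_sum_list lin_fun_scale case_prod_unfold)

lemma sweedler_antipode_right: "lin_fun sm f \<Longrightarrow> sweedler x (\<lambda>a b. f (a * S b)) = \<epsilon> x * f 1"
  using arg_cong[OF antipode_right, of f]
  by (simp add: sweedler_def lin_fun_sum_list lin_fun_scale case_prod_unfold)

primrec iter_coprod :: "nat \<Rightarrow> 'a \<Rightarrow> 'a list list" where
  "iter_coprod 0 x = [[x]]"
| "iter_coprod (Suc n) x = concat (map (\<lambda>(a, b). map ((#) a) (iter_coprod n b)) (\<Delta> x))"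

definition sweedler_iter :: "nat \<Rightarrow> 'a \<Rightarrow> ('a list \<Rightarrow> 'k) \<Rightarrow> 'k" where
  "sweedler_iter n x F = sum_list (map F (iter_coprod n x))"

definition multilinear :: "nat \<Rightarrow> ('a list \<Rightarrow> 'k) \<Rightarrow> bool" where
  "multilinear n F \<longleftrightarrow> (\<forall>t i. length t = n \<longrightarrow> i < n \<longrightarrow> lin_fun sm (\<lambda>v. F (t[i := v])))"

lemma sweedler_iter_0: "sweedler_iter 0 x F = F [x]"
  by (simp add: sweedler_iter_def)

lemma sweedler_iter_Suc: "sweedler_iter (Suc n) x F = sweedler x (\<lambda>a b. sweedler_iter n b (\<lambda>t. F (a # t)))"
  by (simp add: sweedler_iter_def sweedler_def sum_list_map_concat comp_def case_prod_unfold)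

lemma sweedler_iter_1: "sweedler_iter 1 x F = sweedler x (\<lambda>a b. F [a, b])"
  by (simp add: sweedler_iter_Suc[of 0, simplified] sweedler_iter_0)

lemma sweedler_iter_2: "sweedler_iter 2 x F = sweedler x (\<lambda>a b. sweedler b (\<lambda>c d. F [a, c, d]))"
  by (simp add: numeral_2_eq_2 sweedler_iter_Suc sweedler_iter_0)

lemma length_iter_coprod: "t \<in> set (iter_coprod n x) \<Longrightarrow> length t = Suc n"
  by (induction n arbitrary: x t) auto

lemma sweedler_iter_cong: "(\<And>t. length t = Suc n \<Longrightarrow> F t = G t) \<Longrightarrow> sweedler_iter n x F = sweedler_iter n x G"
  unfolding sweedler_iter_def by (auto simp: length_iter_coprod intro!: arg_cong[where f = sum_list])

lemma sweedler_iter_plus: "sweedler_iter n x (\<lambda>t. F t + G t) = sweedler_iter n x F + sweedler_iter n x G"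
  by (simp add: sweedler_iter_def sum_list_addf)

lemma sweedler_iter_const_mult: "sweedler_iter n x (\<lambda>t. c * F t) = c * sweedler_iter n x F"
  by (simp add: sweedler_iter_def sum_list_const_mult)

lemma sweedler_iter_mult_const: "sweedler_iter n x (\<lambda>t. F t * c) = sweedler_iter n x F * c"
  by (simp add: sweedler_iter_def sum_list_mult_const)

lemma sweedler_iter_swap:
  "sweedler_iter n x (\<lambda>t. sweedler_iter m y (\<lambda>s. G t s)) = sweedler_iter m y (\<lambda>s. sweedler_iter n x (\<lambda>t. G t s))"
  unfolding sweedler_iter_def by (rule sum_list_swap)

lemma sweedler_iter_sweedler_swap:
  "sweedler_iter n x (\<lambda>t. sweedler y (\<lambda>a b. G t a b)) = sweedler y (\<lambda>a b. sweedler_iter n x (\<lambda>t. G t a b))"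
  unfolding sweedler_iter_def sweedler_def case_prod_unfold by (rule sum_list_swap)

lemma multilinear_0 [simp]: "multilinear 0 F"
  by (simp add: multilinear_def)

lemma multilinear_Suc_iff:
  "multilinear (Suc n) F \<longleftrightarrow>
     (\<forall>t. length t = n \<longrightarrow> lin_fun sm (\<lambda>a. F (a # t))) \<and> (\<forall>a. multilinear n (\<lambda>t. F (a # t)))"
proof
  assume "multilinear (Suc n) F"
  then have ml: "\<And>t i. length t = Suc n \<Longrightarrow> i < Suc n \<Longrightarrow> lin_fun sm (\<lambda>v. F (t[i := v]))"
    by (simp add: multilinear_def)
  have "lin_fun sm (\<lambda>a. F (a # t))" if "length t = n" for t
    using ml[of "undefined # t" 0] that by simp
  moreover have "multilinear n (\<lambda>t. F (a # t))" for a
    using ml[of "a # _" "Suc _"] by (simp add: multilinear_def)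
  ultimately show "(\<forall>t. length t = n \<longrightarrow> lin_fun sm (\<lambda>a. F (a # t))) \<and> (\<forall>a. multilinear n (\<lambda>t. F (a # t)))"
    by blast
next
  assume ml: "(\<forall>t. length t = n \<longrightarrow> lin_fun sm (\<lambda>a. F (a # t))) \<and> (\<forall>a. multilinear n (\<lambda>t. F (a # t)))"
  show "multilinear (Suc n) F"
    unfolding multilinear_def
  proof (intro allI impI)
    fix t :: "'a list" and i assume "length t = Suc n" "i < Suc n"
    with ml show "lin_fun sm (\<lambda>v. F (t[i := v]))"
      by (cases t; cases i) (auto simp: multilinear_def)
  qed
qed

lemma multilinear_head: "multilinear (Suc n) F \<Longrightarrow> length t = n \<Longrightarrow> lin_fun sm (\<lambda>a. F (a # t))"
  by (simp add: multilinear_Suc_iff)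

lemma multilinear_Cons: "multilinear (Suc n) F \<Longrightarrow> multilinear n (\<lambda>t. F (a # t))"
  by (simp add: multilinear_Suc_iff)

lemma multilinear_nth:
  assumes "multilinear n F" "length t = n" "i < n"
  shows "lin_fun sm (\<lambda>v. F (take i t @ v # drop (Suc i) t))"
  using assms by (simp add: multilinear_def upd_conv_take_nth_drop[symmetric])

lemma lin_fun_sweedler_iter_fun:
  "(\<And>t. length t = Suc n \<Longrightarrow> lin_fun sm (\<lambda>v. G v t)) \<Longrightarrow> lin_fun sm (\<lambda>v. sweedler_iter n x (G v))"
  unfolding sweedler_iter_def by (rule lin_fun_sum_list_fun) (auto dest: length_iter_coprod)

lemma lin_fun_sweedler_iter: "multilinear (Suc n) F \<Longrightarrow> lin_fun sm (\<lambda>x. sweedler_iter n x F)"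
proof (induction n arbitrary: F)
  case 0
  then show ?case by (simp add: sweedler_iter_0 multilinear_Suc_iff)
next
  case (Suc n)
  then have "lin_fun2 sm (\<lambda>a b. sweedler_iter n b (\<lambda>t. F (a # t)))"
    by (auto simp: lin_fun2_def multilinear_Suc_iff[of "Suc n"] intro!: lin_fun_sweedler_iter_fun)
  then show ?case by (simp add: sweedler_iter_Suc lin_fun_sweedler)
qed

lemma sweedler_iter_split_nth:
  "i \<le> n \<Longrightarrow> multilinear (Suc (Suc n)) F \<Longrightarrow>
   sweedler_iter n x (\<lambda>t. sweedler (t!i) (\<lambda>a b. F (take i t @ a # b # drop (Suc i) t))) = sweedler_iter (Suc n) x F"
proof (induction n arbitrary: x F i)
  case 0
  then show ?case by (simp add: sweedler_iter_0 sweedler_iter_Suc)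
next
  case (Suc n)
  note ml = Suc.prems(2)
  show ?case
  proof (cases i)
    case 0
    have "lin_fun3 sm (\<lambda>a b d. sweedler_iter n d (\<lambda>t. F (a # b # t)))"
      unfolding lin_fun3_def
      by (auto intro!: lin_fun_sweedler_iter_fun lin_fun_sweedler_iter multilinear_head[OF ml]
          multilinear_head[OF multilinear_Cons[OF ml]] multilinear_Cons[OF multilinear_Cons[OF ml]])
    then show ?thesis
      using 0 by (simp add: sweedler_iter_Suc sweedler_iter_sweedler_swap sweedler_coassoc)
  next
    case (Suc j)
    with Suc.prems have j: "j \<le> n" by simp
    have "sweedler_iter n b (\<lambda>t. sweedler (t!j) (\<lambda>c d. F (a # take j t @ c # d # drop (Suc j) t))) =
          sweedler_iter (Suc n) b (\<lambda>t. F (a # t))" for a b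
      using Suc.IH[OF j multilinear_Cons[OF ml]] by simp
    with Suc show ?thesis by (simp add: sweedler_iter_Suc)
  qed
qed

lemma sweedler_iter_split:
  assumes "i < m" "m = Suc n" "multilinear (Suc m) F"
    and "\<And>t. length t = m \<Longrightarrow> G t = sweedler (t!i) (\<lambda>a b. F (take i t @ a # b # drop (Suc i) t))"
  shows "sweedler_iter n x G = sweedler_iter m x F"
  using sweedler_iter_split_nth[of i n F x] sweedler_iter_cong[of n G] assms by simp

lemma sweedler_iter_counit_left:
  assumes i: "i < m" "m = Suc n" and "multilinear (Suc m) G" and K: "multilinear m K"
    and G: "\<And>t. length t = Suc m \<Longrightarrow> G t = \<epsilon> (t!i) * K (take i t @ drop (Suc i) t)"
  shows "sweedler_iter m x G = sweedler_iter n x K"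
proof (rule sweedler_iter_split[OF i assms(3), symmetric])
  fix t :: "'a list" assume t: "length t = m"
  have "sweedler (t!i) (\<lambda>a b. G (take i t @ a # b # drop (Suc i) t)) =
        sweedler (t!i) (\<lambda>a b. \<epsilon> a * K (take i t @ b # drop (Suc i) t))"
    using i t by (simp add: G nth_append min_def)
  also have "\<dots> = K t"
    using sweedler_counit_left[OF multilinear_nth[OF K t i(1)]] i t by (simp add: id_take_nth_drop[symmetric])
  finally show "K t = sweedler (t!i) (\<lambda>a b. G (take i t @ a # b # drop (Suc i) t))" by simp
qed

lemma sweedler_iter_counit_right:
  assumes i: "i < m" "m = Suc n" and "multilinear (Suc m) G" and K: "multilinear m K"
    and G: "\<And>t. length t = Suc m \<Longrightarrow> G t = K (take (Suc i) t @ drop (Suc (Suc i)) t) * \<epsilon> (t!Suc i)"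
  shows "sweedler_iter m x G = sweedler_iter n x K"
proof (rule sweedler_iter_split[OF i assms(3), symmetric])
  fix t :: "'a list" assume t: "length t = m"
  have "sweedler (t!i) (\<lambda>a b. G (take i t @ a # b # drop (Suc i) t)) =
        sweedler (t!i) (\<lambda>a b. K (take i t @ a # drop (Suc i) t) * \<epsilon> b)"
    using i t by (simp add: G nth_append min_def)
  also have "\<dots> = K t"
    using sweedler_counit_right[OF multilinear_nth[OF K t i(1)]] i t by (simp add: id_take_nth_drop[symmetric])
  finally show "K t = sweedler (t!i) (\<lambda>a b. G (take i t @ a # b # drop (Suc i) t))" by simp
qed

lemma sweedler_iter_antipode_left:
  assumes i: "i < m" "m = Suc n" and "multilinear (Suc m) G" and K: "multilinear m K"
    and G: "\<And>t. length t = Suc m \<Longrightarrow> G t = K (take i t @ (S (t!i) * t!Suc i) # drop (Suc (Suc i)) t)"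
    and H: "\<And>t. length t = m \<Longrightarrow> H t = \<epsilon> (t!i) * K (take i t @ 1 # drop (Suc i) t)"
  shows "sweedler_iter m x G = sweedler_iter n x H"
proof (rule sweedler_iter_split[OF i assms(3), symmetric])
  fix t :: "'a list" assume t: "length t = m"
  have "sweedler (t!i) (\<lambda>a b. G (take i t @ a # b # drop (Suc i) t)) =
        sweedler (t!i) (\<lambda>a b. K (take i t @ (S a * b) # drop (Suc i) t))"
    using i t by (simp add: G nth_append min_def)
  also have "\<dots> = H t"
    using sweedler_antipode_left[OF multilinear_nth[OF K t i(1)]] t by (simp add: H)
  finally show "H t = sweedler (t!i) (\<lambda>a b. G (take i t @ a # b # drop (Suc i) t))" by simp
qed

lemma sweedler_iter_antipode_right:
  assumes i: "i < m" "m = Suc n" and "multilinear (Suc m) G" and K: "multilinear m K"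
    and G: "\<And>t. length t = Suc m \<Longrightarrow> G t = K (take i t @ (t!i * S (t!Suc i)) # drop (Suc (Suc i)) t)"
    and H: "\<And>t. length t = m \<Longrightarrow> H t = \<epsilon> (t!i) * K (take i t @ 1 # drop (Suc i) t)"
  shows "sweedler_iter m x G = sweedler_iter n x H"
proof (rule sweedler_iter_split[OF i assms(3), symmetric])
  fix t :: "'a list" assume t: "length t = m"
  have "sweedler (t!i) (\<lambda>a b. G (take i t @ a # b # drop (Suc i) t)) =
        sweedler (t!i) (\<lambda>a b. K (take i t @ (a * S b) # drop (Suc i) t))"
    using i t by (simp add: G nth_append min_def)
  also have "\<dots> = H t"
    using sweedler_antipode_right[OF multilinear_nth[OF K t i(1)]] t by (simp add: H)
  finally show "H t = sweedler (t!i) (\<lambda>a b. G (take i t @ a # b # drop (Suc i) t))" by simp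
qed

lemma sweedler_iter_add:
  "multilinear (Suc n) F \<Longrightarrow> sweedler_iter n (x + y) F = sweedler_iter n x F + sweedler_iter n y F"
  using lin_fun_add[OF lin_fun_sweedler_iter] .

lemma sweedler_iter_scale: "multilinear (Suc n) F \<Longrightarrow> sweedler_iter n (sm c x) F = c * sweedler_iter n x F"
  using lin_fun_scale[OF lin_fun_sweedler_iter] .

(* With these two collections auto decides the side conditions of the calculus rules below:
   multilinearity of the summand and the shape of its argument lists. *)

lemmas multilinear_simps = multilinear_Suc_iff length_Suc_conv eval_nat_numeral

lemmas linearity_simps = lin_fun_def lin_fun2_def antipode_add antipode_scale distrib_left distrib_right
  sm_mult_left sm_mult_right counit_add counit_scale sweedler_add sweedler_scale
  sweedler_plus sweedler_const_mult sweedler_iter_add sweedler_iter_scale sweedler_iter_plus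
  sweedler_iter_const_mult mult.assoc mult.left_commute

lemma antipode_mult_functional:
  assumes h: "lin_fun sm h"
  shows "h (S b * S a) = h (S (a * b))"
proof -
  note hs = lin_fun_add[OF h] lin_fun_scale[OF h]
  have mult_left: "lin_fun sm (\<lambda>v. h (X * v))" for X
    by (simp add: linearity_simps hs)
  have "h (S b * S a) = sweedler a (\<lambda>a0 a1. sweedler b (\<lambda>b0 b1. h (S b0 * S a0) * \<epsilon> b1) * \<epsilon> a1)"
    by (simp add: sweedler_counit_right linearity_simps hs)
  also have "\<dots> = sweedler_iter 1 a (\<lambda>t. sweedler_iter 1 b (\<lambda>u. \<epsilon> (t!1 * u!1) * h (S (u!0) * S (t!0))))"
    by (simp add: sweedler_iter_Suc sweedler_iter_0 counit_mult
      sweedler_mult_const[symmetric] sweedler_const_mult[symmetric] mult_ac)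
  also have "\<dots> = sweedler_iter 1 a (\<lambda>t. sweedler_iter 1 b (\<lambda>u. sweedler (t!1 * u!1) (\<lambda>p q.
      h (S (u!0) * S (t!0) * (p * S q)))))"
    by (simp add: sweedler_antipode_right[OF mult_left])
  also have "\<dots> = sweedler_iter 1 a (\<lambda>t. sweedler (t!1) (\<lambda>p q. sweedler_iter 1 b (\<lambda>u.
      sweedler (u!1) (\<lambda>r s. h (S (u!0) * S (t!0) * (p * r * S (q * s)))))))"
    by (simp add: sweedler_mult linearity_simps hs sweedler_iter_sweedler_swap)
  also have "\<dots> = sweedler_iter 2 a (\<lambda>t. sweedler_iter 1 b (\<lambda>u. sweedler (u!1) (\<lambda>r s.
      h (S (u!0) * S (t!0) * (t!1 * r * S (t!2 * s))))))"
    by (rule sweedler_iter_split[where i=1 and n=1 and m=2]) (auto simp: multilinear_simps linearity_simps hs)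
  also have "\<dots> = sweedler_iter 2 a (\<lambda>t. sweedler_iter 2 b (\<lambda>u.
      h (S (u!0) * S (t!0) * (t!1 * u!1 * S (t!2 * u!2)))))"
    by (intro sweedler_iter_cong sweedler_iter_split[where i=1 and n=1 and m=2])
      (auto simp: multilinear_simps linearity_simps hs)
  also have "\<dots> = sweedler_iter 1 a (\<lambda>t. \<epsilon> (t!0) * sweedler_iter 2 b (\<lambda>u.
      h (S (u!0) * u!1 * S (t!1 * u!2))))"
    by (rule sweedler_iter_antipode_left[where i=0 and n=1 and m=2
          and K="\<lambda>l. sweedler_iter 2 b (\<lambda>u. h (S (u!0) * (l!0) * u!1 * S (l!1 * u!2)))"])
      (auto simp: multilinear_simps linearity_simps hs)
  also have "\<dots> = sweedler_iter 0 a (\<lambda>l. sweedler_iter 2 b (\<lambda>u. h (S (u!0) * u!1 * S (l!0 * u!2))))"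
    by (rule sweedler_iter_counit_left[where i=0 and n=0 and m=1]) (auto simp: multilinear_simps linearity_simps hs)
  also have "\<dots> = sweedler_iter 2 b (\<lambda>u. h (S (u!0) * u!1 * S (a * u!2)))"
    by (simp add: sweedler_iter_0)
  also have "\<dots> = sweedler_iter 1 b (\<lambda>u. \<epsilon> (u!0) * h (S (a * u!1)))"
    by (rule sweedler_iter_antipode_left[where i=0 and n=1 and m=2
          and K="\<lambda>l. h (l!0 * S (a * l!1))"])
      (auto simp: multilinear_simps linearity_simps hs)
  also have "\<dots> = sweedler_iter 0 b (\<lambda>l. h (S (a * l!0)))"
    by (rule sweedler_iter_counit_left[where i=0 and n=0 and m=1]) (auto simp: multilinear_simps linearity_simps hs)
  also have "\<dots> = h (S (a * b))"
    by (simp add: sweedler_iter_0)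
  finally show ?thesis .
qed

lemma antipode_mult: "S (a * b) = S b * S a"
  by (rule lin_fun_separating) (simp add: antipode_mult_functional)

lemma antipode_one: "S 1 = 1"
proof (rule lin_fun_separating)
  fix h assume h: "lin_fun sm h"
  have "lin_fun2 sm (\<lambda>a b. h (S a * b))"
    by (simp add: linearity_simps lin_fun_add[OF h] lin_fun_scale[OF h])
  then have "sweedler 1 (\<lambda>a b. h (S a * b)) = h (S 1)"
    by (simp add: sweedler_one)
  moreover have "sweedler 1 (\<lambda>a b. h (S a * b)) = h 1"
    by (simp add: sweedler_antipode_left[OF h] counit_one)
  ultimately show "h (S 1) = h 1" by simp
qed

lemma sweedler_antipode_product:
  assumes f: "lin_fun sm f" and g: "lin_fun sm g"
  shows "sweedler (S x) (\<lambda>a b. f a * g b) = sweedler x (\<lambda>a b. f (S b) * g (S a))"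
proof -
  note fg = lin_fun_add[OF f] lin_fun_scale[OF f] lin_fun_add[OF g] lin_fun_scale[OF g]
  define T where "T = sweedler_iter 2 x (\<lambda>t. sweedler (S (t!0)) (\<lambda>u v. sweedler (t!1) (\<lambda>p q.
    sweedler (t!2) (\<lambda>r s. f (u * p * S s) * g (v * q * S r)))))"
  have B: "lin_fun2 sm (\<lambda>w1 w2. sweedler y (\<lambda>r s. f (w1 * S s) * g (w2 * S r)))" for y
    by (auto simp: linearity_simps fg)
  have "T = sweedler_iter 2 x (\<lambda>t. sweedler (S (t!0) * t!1) (\<lambda>w1 w2. sweedler (t!2) (\<lambda>r s.
      f (w1 * S s) * g (w2 * S r))))"
    unfolding T_def by (simp add: sweedler_mult[OF B])
  also have "\<dots> = sweedler_iter 1 x (\<lambda>t. \<epsilon> (t!0) * sweedler (t!1) (\<lambda>r s. f (S s) * g (S r)))"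
    by (rule sweedler_iter_antipode_left[where i=0 and n=1 and m=2
          and K="\<lambda>l. sweedler (l!0) (\<lambda>w1 w2. sweedler (l!1) (\<lambda>r s. f (w1 * S s) * g (w2 * S r)))"])
      (auto simp: multilinear_simps linearity_simps fg
        sweedler_one[OF B])
  also have "\<dots> = sweedler_iter 0 x (\<lambda>l. sweedler (l!0) (\<lambda>r s. f (S s) * g (S r)))"
    by (rule sweedler_iter_counit_left[where i=0 and n=0 and m=1])
      (auto simp: multilinear_simps linearity_simps fg)
  finally have T_left: "T = sweedler x (\<lambda>a b. f (S b) * g (S a))"
    by (simp add: sweedler_iter_0)
  have "T = sweedler_iter 2 x (\<lambda>t. sweedler (t!1) (\<lambda>p q. sweedler (S (t!0)) (\<lambda>u v.
    sweedler (t!2) (\<lambda>r s. f (u * p * S s) * g (v * q * S r)))))"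
    unfolding T_def by (simp add: sweedler_swap[of "S _"])
  also have "\<dots> = sweedler_iter 3 x (\<lambda>t. sweedler (t!3) (\<lambda>r s. sweedler (S (t!0)) (\<lambda>u v.
      f (u * t!1 * S s) * g (v * t!2 * S r))))"
    by (rule sweedler_iter_split[where i=1 and n=2 and m=3])
      (auto simp: multilinear_simps linearity_simps fg sweedler_swap[of "S _"])
  also have "\<dots> = sweedler_iter 4 x (\<lambda>t. sweedler (S (t!0)) (\<lambda>u v.
      f (u * t!1 * S (t!4)) * g (v * (t!2 * S (t!3)))))"
    by (rule sweedler_iter_split[where i=3 and n=3 and m=4])
      (auto simp: multilinear_simps linearity_simps fg)
  also have "\<dots> = sweedler_iter 3 x (\<lambda>t. \<epsilon> (t!2) * sweedler (S (t!0)) (\<lambda>u v.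
      f (u * t!1 * S (t!3)) * g v))"
    by (rule sweedler_iter_antipode_right[where i=2 and n=3 and m=4
          and K="\<lambda>l. sweedler (S (l!0)) (\<lambda>u v. f (u * l!1 * S (l!3)) * g (v * l!2))"])
      (auto simp: multilinear_simps linearity_simps fg)
  also have "\<dots> = sweedler_iter 2 x (\<lambda>t. sweedler (S (t!0)) (\<lambda>u v. f (u * (t!1 * S (t!2))) * g v))"
    by (rule sweedler_iter_counit_left[where i=2 and n=2 and m=3])
      (auto simp: multilinear_simps linearity_simps fg)
  also have "\<dots> = sweedler_iter 1 x (\<lambda>t. \<epsilon> (t!1) * sweedler (S (t!0)) (\<lambda>u v. f u * g v))"
    by (rule sweedler_iter_antipode_right[where i=1 and n=1 and m=2
          and K="\<lambda>l. sweedler (S (l!0)) (\<lambda>u v. f (u * l!1) * g v)"])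
      (auto simp: multilinear_simps linearity_simps fg)
  also have "\<dots> = sweedler_iter 0 x (\<lambda>l. sweedler (S (l!0)) (\<lambda>u v. f u * g v))"
    by (rule sweedler_iter_counit_right[where i=0 and n=0 and m=1])
      (auto simp: multilinear_simps linearity_simps fg)
  finally show ?thesis using T_left by (simp add: sweedler_iter_0)
qed

lemma sweedler_antipode:
  assumes "lin_fun2 sm B"
  shows "sweedler (S x) B = sweedler x (\<lambda>a b. B (S b) (S a))"
proof -
  have "tensor2_eq sm (\<Delta> (S x)) (map (\<lambda>(a, b). (S b, S a)) (\<Delta> x))"
    using sweedler_antipode_product by (simp add: tensor2_eq_def sweedler_def case_prod_unfold comp_def)
  from tensor2_eq_lin_fun2[OF this assms] show ?thesis
    by (simp add: sweedler_def case_prod_unfold comp_def)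
qed

lemma sweedler_inv_antipode:
  assumes "bij S" and f: "lin_fun sm f"
  shows "sweedler x (\<lambda>a b. f (inv S b * a)) = \<epsilon> x * f 1"
proof -
  define w where "w = sum_list (map (\<lambda>(a, b). inv S b * a) (\<Delta> x))"
  have "S w = sum_list (map (\<lambda>(a, b). S a * b) (\<Delta> x))"
    unfolding w_def lin_map_sum_list[OF lin_map_antipode]
    by (simp add: case_prod_unfold antipode_mult bij_is_surj[OF assms(1), THEN surj_f_inv_f])
  also have "\<dots> = S (sm (\<epsilon> x) 1)"
    by (simp add: antipode_left antipode_scale antipode_one)
  finally have "w = sm (\<epsilon> x) 1"
    using bij_is_inj[OF assms(1)] by (simp add: inj_eq)
  then have "f w = \<epsilon> x * f 1"
    by (simp add: lin_fun_scale[OF f])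
  then show ?thesis
    by (simp add: sweedler_def w_def lin_fun_sum_list[OF f] case_prod_unfold)
qed

lemma sum_list_delta3: "sum_list (map (\<lambda>(a, b, c). F a b c) (delta3 \<Delta> x)) =
    sweedler_iter 2 x (\<lambda>t. F (t!0) (t!1) (t!2))"
  by (simp add: delta3_def sweedler_iter_2 sweedler_def sum_list_map_concat comp_def case_prod_unfold)

definition hit :: "('a \<Rightarrow> 'k) \<Rightarrow> 'a \<Rightarrow> 'a" where
  "hit f v = sum_list (map (\<lambda>(a, b). sm (f b) a) (\<Delta> v))"

lemma lin_fun_hit: "lin_fun sm h \<Longrightarrow> h (hit f v) = sweedler v (\<lambda>a b. h a * f b)"
  by (simp add: hit_def sweedler_def lin_fun_sum_list lin_fun_scale case_prod_unfold mult.commute)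

lemma linear_hit:
  assumes f: "lin_fun sm f"
  shows "Vector_Spaces.linear sm sm (hit f)"
proof -
  have B: "lin_fun2 sm (\<lambda>a b. h a * f b)" if "lin_fun sm h" for h
    using that f by (simp add: lin_fun2_def lin_fun_def algebra_simps)
  have "hit f (x + y) = hit f x + hit f y" for x y
    by (rule lin_fun_separating) (simp add: lin_fun_hit lin_fun_add sweedler_add[OF B])
  moreover have "hit f (sm c x) = sm c (hit f x)" for c x
    by (rule lin_fun_separating) (simp add: lin_fun_hit lin_fun_scale sweedler_scale[OF B])
  ultimately show ?thesis
    by (simp add: Vector_Spaces.linear_iff vs.vector_space_axioms)
qed

lemma conv_eq_sweedler: "conv \<Delta> f g x = sweedler x (\<lambda>a b. f a * g b)"
  by (simp add: conv_def sweedler_def)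

lemma lin_fun_conv: "lin_fun sm f \<Longrightarrow> lin_fun sm g \<Longrightarrow> lin_fun sm (conv \<Delta> f g)"
  unfolding conv_eq_sweedler[abs_def] by (rule lin_fun_sweedler) (simp add: lin_fun2_def lin_fun_def algebra_simps)

lemma hit_hit:
  assumes f: "lin_fun sm f" and g: "lin_fun sm g"
  shows "hit f (hit g v) = hit (conv \<Delta> f g) v"
proof (rule lin_fun_separating)
  fix h assume h: "lin_fun sm h"
  note fgh = lin_fun_add[OF f] lin_fun_scale[OF f] lin_fun_add[OF g] lin_fun_scale[OF g]
    lin_fun_add[OF h] lin_fun_scale[OF h]
  have "h (hit f (hit g v)) = sweedler (hit g v) (\<lambda>a b. h a * f b)"
    by (simp add: lin_fun_hit h)
  also have "\<dots> = sweedler v (\<lambda>c d. sweedler c (\<lambda>a b. h a * f b) * g d)"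
    by (simp add: hit_def sweedler_def[of v] lin_fun_sum_list[OF lin_fun_sweedler] linearity_simps fgh
        case_prod_unfold mult.commute)
  also have "\<dots> = sweedler v (\<lambda>a e. sweedler e (\<lambda>b d. h a * f b * g d))"
    by (subst sweedler_coassoc) (simp_all add: lin_fun3_def linearity_simps fgh sweedler_mult_const[symmetric])
  also have "\<dots> = h (hit (conv \<Delta> f g) v)"
    by (simp add: lin_fun_hit[OF h] conv_eq_sweedler sweedler_const_mult[symmetric] mult.assoc)
  finally show "h (hit f (hit g v)) = h (hit (conv \<Delta> f g) v)" .
qed

lemma counit_hit: "lin_fun sm f \<Longrightarrow> \<epsilon> (hit f v) = f v"
  by (simp add: lin_fun_hit lin_fun_counit sweedler_counit_left)

lemma hit_counit: "hit \<epsilon> v = v"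
  unfolding hit_def by (rule counit_right)

definition hit_submodule :: "'a \<Rightarrow> 'a set" where
  "hit_submodule x = {hit f x | f. lin_fun sm f}"

lemma subspace_hit_submodule: "vs.subspace (hit_submodule x)"
  unfolding vs.subspace_def
proof (intro conjI ballI allI)
  have "hit (\<lambda>_. 0) x = 0" by (simp add: hit_def case_prod_unfold)
  then show "0 \<in> hit_submodule x" unfolding hit_submodule_def by (force simp: lin_fun_def)
next
  fix u w assume "u \<in> hit_submodule x" "w \<in> hit_submodule x"
  then obtain f g where "lin_fun sm f" "lin_fun sm g" "u = hit f x" "w = hit g x"
    unfolding hit_submodule_def by blast
  moreover have "hit f x + hit g x = hit (\<lambda>v. f v + g v) x"
    by (simp add: hit_def sum_list_addf[symmetric] case_prod_unfold sm_add_left)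
  ultimately show "u + w \<in> hit_submodule x" unfolding hit_submodule_def by (blast intro: lin_fun_plus)
next
  fix c u assume "u \<in> hit_submodule x"
  then obtain f where "lin_fun sm f" "u = hit f x"
    unfolding hit_submodule_def by blast
  moreover have "sm c (hit f x) = hit (\<lambda>v. c * f v) x"
    by (simp add: hit_def sm_sum_list case_prod_unfold sm_sm)
  ultimately show "sm c u \<in> hit_submodule x" unfolding hit_submodule_def by (blast intro: lin_fun_const_mult)
qed

lemma hit_submodule_subset_span: "hit_submodule x \<subseteq> vs.span (fst ` set (\<Delta> x))"
  by (auto simp: hit_submodule_def hit_def case_prod_unfold intro!: span_sum_list vs.span_scale intro: vs.span_base)

lemma hit_image_hit_submodule: "lin_fun sm g \<Longrightarrow> hit g ` hit_submodule x \<subseteq> hit_submodule x"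
  by (auto simp: hit_submodule_def hit_hit lin_fun_conv)

lemma mem_hit_submodule: "x \<in> hit_submodule x"
  using hit_counit[of x] lin_fun_counit unfolding hit_submodule_def by force

(* A left convolution inverse makes hit \<beta> injective; on the finite-dimensional invariant subspace
   hit_submodule x it is then also surjective, which gives (\<beta> * \<alpha>)(x) = \<epsilon>(x). *)

lemma conv_left_inverse_imp_right:
  assumes \<alpha>: "lin_fun sm \<alpha>" and \<beta>: "lin_fun sm \<beta>" and inverse: "conv \<Delta> \<alpha> \<beta> = \<epsilon>"
  shows "conv \<Delta> \<beta> \<alpha> = \<epsilon>"
proof
  fix x
  have "inj (hit \<beta>)"
    by (rule injI) (metis hit_hit[OF \<alpha> \<beta>] inverse hit_counit)
  then have "hit \<beta> ` hit_submodule x = hit_submodule x"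
    using inj_linear_image_finite_subspace[OF linear_hit[OF \<beta>] _ subspace_hit_submodule
        hit_submodule_subset_span _ hit_image_hit_submodule[OF \<beta>]] by simp
  then obtain m where "x = hit \<beta> m"
    using mem_hit_submodule by blast
  then have "hit \<beta> (hit \<alpha> x) = x"
    by (simp add: hit_hit \<alpha> \<beta> inverse hit_counit)
  then have "hit (conv \<Delta> \<beta> \<alpha>) x = x"
    by (simp add: hit_hit \<alpha> \<beta>)
  then show "conv \<Delta> \<beta> \<alpha> x = \<epsilon> x"
    by (metis counit_hit lin_fun_conv \<alpha> \<beta>)
qed

lemma sweedler_iter_flatten:
  assumes "multilinear 3 (\<lambda>s. sweedler_iter 1 (s!1) (\<lambda>u. F (s!0 # u) (s!2)))"
    and "multilinear 4 (\<lambda>s. F [s!0, s!1, s!2] (s!3))"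
  shows "sweedler_iter 1 w (\<lambda>s. sweedler_iter 2 (s!0) (\<lambda>s'. F s' (s!1))) =
    sweedler_iter 3 w (\<lambda>s. F [s!0, s!1, s!2] (s!3))"
proof -
  have "sweedler_iter 1 w (\<lambda>s. sweedler_iter 2 (s!0) (\<lambda>s'. F s' (s!1))) =
        sweedler_iter 1 w (\<lambda>s. sweedler (s!0) (\<lambda>a b. sweedler_iter 1 b (\<lambda>u. F (a # u) (s!1))))"
    by (simp add: numeral_2_eq_2 sweedler_iter_Suc)
  also have "\<dots> = sweedler_iter 2 w (\<lambda>s. sweedler_iter 1 (s!1) (\<lambda>u. F (s!0 # u) (s!2)))"
    by (rule sweedler_iter_split[where i=0 and n=1 and m=2]) (use assms(1) in \<open>auto simp: length_Suc_conv\<close>)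
  also have "\<dots> = sweedler_iter 2 w (\<lambda>s. sweedler (s!1) (\<lambda>a b. F [s!0, a, b] (s!2)))"
    by (simp add: sweedler_iter_Suc sweedler_iter_0)
  also have "\<dots> = sweedler_iter 3 w (\<lambda>s. F [s!0, s!1, s!2] (s!3))"
    by (rule sweedler_iter_split[where i=1 and n=2 and m=3]) (use assms(2) in \<open>auto simp: multilinear_simps\<close>)
  finally show ?thesis .
qed

end

locale paired_hopf_map =
  U: hopf smU \<Delta>U \<epsilon>U SU + V: hopf smV \<Delta>V \<epsilon>V SV
  for smU :: "'k::field \<Rightarrow> 'u::ring_1 \<Rightarrow> 'u" and \<Delta>U \<epsilon>U SU
    and smV :: "'k \<Rightarrow> 'v::ring_1 \<Rightarrow> 'v" and \<Delta>V \<epsilon>V SV +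
  fixes p :: "'u \<Rightarrow> 'v \<Rightarrow> 'k" and \<gamma> :: "'v \<Rightarrow> 'u"
  assumes bij_SU: "bij SU" and bij_SV: "bij SV"
    and pairing: "hopf_pairing smU \<Delta>U \<epsilon>U smV \<Delta>V \<epsilon>V p"
    and gamma: "hopf_map_cop smU \<Delta>U \<epsilon>U smV \<Delta>V \<epsilon>V \<gamma>"
    and commutation: "\<And>y m. \<gamma> y * m =
       sum_list (map (\<lambda>(m1, m2, m3). sum_list (map (\<lambda>(y1, y2, y3).
          smU (p (inv SU m1) y3 * p m3 y1) (m2 * \<gamma> y2)) (delta3 \<Delta>V y))) (delta3 \<Delta>U m))"
begin

lemma lin_fun_pairing_left: "lin_fun smU (\<lambda>m. p m x)"
  using pairing by (simp add: hopf_pairing_def)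
lemma lin_fun_pairing_right: "lin_fun smV (p m)"
  using pairing by (simp add: hopf_pairing_def)
lemma pairing_mult_left: "p (m * n) x = V.sweedler x (\<lambda>a b. p m a * p n b)"
  using pairing by (simp add: hopf_pairing_def V.sweedler_def)
lemma pairing_mult_right: "p m (x * y) = U.sweedler m (\<lambda>a b. p a x * p b y)"
  using pairing by (simp add: hopf_pairing_def U.sweedler_def)
lemma pairing_one_left: "p 1 x = \<epsilon>V x"
  using pairing by (simp add: hopf_pairing_def)
lemma pairing_one_right: "p m 1 = \<epsilon>U m"
  using pairing by (simp add: hopf_pairing_def)

lemma lin_map_gamma: "lin_map smV smU \<gamma>"
  using gamma by (simp add: hopf_map_cop_def)
lemma gamma_mult: "\<gamma> (x * y) = \<gamma> x * \<gamma> y"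
  using gamma by (simp add: hopf_map_cop_def)
lemma gamma_one: "\<gamma> 1 = 1"
  using gamma by (simp add: hopf_map_cop_def)
lemma counit_gamma: "\<epsilon>U (\<gamma> y) = \<epsilon>V y"
  using gamma by (simp add: hopf_map_cop_def)

lemma sweedler_gamma:
  assumes "lin_fun2 smU B"
  shows "U.sweedler (\<gamma> y) B = V.sweedler y (\<lambda>a b. B (\<gamma> b) (\<gamma> a))"
proof -
  have "tensor2_eq smU (\<Delta>U (\<gamma> y)) (map (\<lambda>(a, b). (\<gamma> b, \<gamma> a)) (\<Delta>V y))"
    using gamma by (simp add: hopf_map_cop_def)
  from U.tensor2_eq_lin_fun2[OF this assms] show ?thesis
    by (simp add: U.sweedler_def V.sweedler_def case_prod_unfold comp_def)
qed

lemma lin_map_inv_antipode: "lin_map smU smU (inv SU)"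
  by (rule lin_map_inv[OF bij_SU U.lin_map_antipode])

lemmas pairing_add_left = lin_fun_add[OF lin_fun_pairing_left]
  and pairing_scale_left = lin_fun_scale[OF lin_fun_pairing_left]
  and pairing_add_right = lin_fun_add[OF lin_fun_pairing_right]
  and pairing_scale_right = lin_fun_scale[OF lin_fun_pairing_right]
  and gamma_add = lin_map_add[OF lin_map_gamma]
  and gamma_scale = lin_map_scale[OF lin_map_gamma]
  and inv_antipode_add = lin_map_add[OF lin_map_inv_antipode]
  and inv_antipode_scale = lin_map_scale[OF lin_map_inv_antipode]

lemmas linearity_simps = U.linearity_simps V.linearity_simps pairing_add_left pairing_scale_left
  pairing_add_right pairing_scale_right gamma_add gamma_scale inv_antipode_add inv_antipode_scale

lemma sweedler_iter_gamma:
  assumes "lin_fun3 smU \<Phi>"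
  shows "U.sweedler_iter 2 (\<gamma> z) (\<lambda>s. \<Phi> (s!0) (s!1) (s!2)) =
    V.sweedler_iter 2 z (\<lambda>s. \<Phi> (\<gamma> (s!2)) (\<gamma> (s!1)) (\<gamma> (s!0)))"
proof -
  have "U.sweedler_iter 2 (\<gamma> z) (\<lambda>s. \<Phi> (s!0) (s!1) (s!2)) = V.sweedler z (\<lambda>a b. V.sweedler a (\<lambda>c d.
      \<Phi> (\<gamma> b) (\<gamma> d) (\<gamma> c)))"
    using assms by (simp add: U.sweedler_iter_2
      sweedler_gamma lin_fun3_def lin_fun2_def U.lin_fun_sweedler_fun U.lin_fun_sweedler)
  also have "\<dots> = V.sweedler_iter 2 z (\<lambda>s. \<Phi> (\<gamma> (s!2)) (\<gamma> (s!1)) (\<gamma> (s!0)))"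
    using assms unfolding lin_fun3_def
    by (subst V.sweedler_iter_split[where i=0 and n=1 and m=2, symmetric])
      (auto simp: V.multilinear_simps V.sweedler_iter_Suc V.sweedler_iter_0 intro!: lin_fun_comp[OF lin_map_gamma])
  finally show ?thesis .
qed

lemma gamma_mult_functional:
  assumes h: "lin_fun smU h"
  shows "h (\<gamma> y * \<gamma> z) = V.sweedler_iter 2 y (\<lambda>t. V.sweedler_iter 2 z (\<lambda>s.
     p (inv SU (\<gamma> (s!2))) (t!2) * p (\<gamma> (s!0)) (t!0) * h (\<gamma> (s!1) * \<gamma> (t!1))))"
proof -
  note hs = lin_fun_add[OF h] lin_fun_scale[OF h]
  have "h (\<gamma> y * \<gamma> z) = sum_list (map (\<lambda>(m1, m2, m3). sum_list (map (\<lambda>(y1, y2, y3).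
      p (inv SU m1) y3 * p m3 y1 * h (m2 * \<gamma> y2)) (delta3 \<Delta>V y))) (delta3 \<Delta>U (\<gamma> z)))"
    by (subst commutation) (simp add: lin_fun_sum_list[OF h] case_prod_unfold hs)
  also have "\<dots> = U.sweedler_iter 2 (\<gamma> z) (\<lambda>s. V.sweedler_iter 2 y (\<lambda>t.
      p (inv SU (s!0)) (t!2) * p (s!2) (t!0) * h (s!1 * \<gamma> (t!1))))"
    by (simp add: U.sum_list_delta3 V.sum_list_delta3)
  also have "\<dots> = V.sweedler_iter 2 z (\<lambda>s. V.sweedler_iter 2 y (\<lambda>t.
      p (inv SU (\<gamma> (s!2))) (t!2) * p (\<gamma> (s!0)) (t!0) * h (\<gamma> (s!1) * \<gamma> (t!1))))"
    by (rule sweedler_iter_gamma) (auto simp: lin_fun3_def linearity_simps hs)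
  finally show ?thesis by (subst V.sweedler_iter_swap)
qed

lemma pairing_inv_antipode_gamma:
  "V.sweedler w (\<lambda>c d. V.sweedler v (\<lambda>f e. p (inv SU (\<gamma> f)) c * p (\<gamma> e) d)) = \<epsilon>V v * \<epsilon>V w"
proof -
  have "V.sweedler w (\<lambda>c d. V.sweedler v (\<lambda>f e. p (inv SU (\<gamma> f)) c * p (\<gamma> e) d)) =
        V.sweedler v (\<lambda>f e. p (inv SU (\<gamma> f) * \<gamma> e) w)"
    by (subst V.sweedler_swap) (simp add: pairing_mult_left)
  also have "\<dots> = U.sweedler (\<gamma> v) (\<lambda>a b. p (inv SU b * a) w)"
    by (simp add: sweedler_gamma linearity_simps)
  also have "\<dots> = \<epsilon>V v * \<epsilon>V w"
    by (simp add: U.sweedler_inv_antipode[OF bij_SU lin_fun_pairing_left] counit_gamma pairing_one_left)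
  finally show ?thesis .
qed

lemma gamma_commutation_expanded:
  assumes h: "lin_fun smU h"
  shows "V.sweedler y (\<lambda>y1 y2. V.sweedler z (\<lambda>z1 z2. h (\<gamma> y1 * \<gamma> z1) * p (\<gamma> z2) y2)) =
    V.sweedler_iter 3 y (\<lambda>t. V.sweedler_iter 3 z (\<lambda>s.
      p (inv SU (\<gamma> (s!2))) (t!2) * p (\<gamma> (s!0)) (t!0) * h (\<gamma> (s!1) * \<gamma> (t!1)) * p (\<gamma> (s!3)) (t!3)))"
proof -
  note hs = lin_fun_add[OF h] lin_fun_scale[OF h]
  define mult_rhs where "mult_rhs s t =
    p (inv SU (\<gamma> (s!2))) (t!2) * p (\<gamma> (s!0)) (t!0) * h (\<gamma> (s!1) * \<gamma> (t!1))" for s t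
  have "V.sweedler y (\<lambda>y1 y2. V.sweedler z (\<lambda>z1 z2. h (\<gamma> y1 * \<gamma> z1) * p (\<gamma> z2) y2)) =
    V.sweedler_iter 1 y (\<lambda>t. V.sweedler_iter 1 z (\<lambda>s. V.sweedler_iter 2 (t!0) (\<lambda>t'. V.sweedler_iter 2 (s!0) (\<lambda>s'.
      mult_rhs s' t' * p (\<gamma> (s!1)) (t!1)))))"
    unfolding V.sweedler_iter_1
    by (intro arg_cong[where f = "V.sweedler _"] ext)
      (subst gamma_mult_functional[OF h], simp add: mult_rhs_def V.sweedler_iter_mult_const)
  also have "\<dots> = V.sweedler_iter 1 y (\<lambda>t. V.sweedler_iter 2 (t!0) (\<lambda>t'. V.sweedler_iter 1 z (\<lambda>s.
      V.sweedler_iter 2 (s!0) (\<lambda>s'. mult_rhs s' t' * p (\<gamma> (s!1)) (t!1)))))"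
    by (intro V.sweedler_iter_cong V.sweedler_iter_swap)
  also have "\<dots> = V.sweedler_iter 3 y (\<lambda>t. V.sweedler_iter 1 z (\<lambda>s.
      V.sweedler_iter 2 (s!0) (\<lambda>s'. mult_rhs s' [t!0, t!1, t!2] * p (\<gamma> (s!1)) (t!3))))"
    by (rule V.sweedler_iter_flatten) (auto simp: V.multilinear_simps mult_rhs_def linearity_simps hs)
  also have "\<dots> = V.sweedler_iter 3 y (\<lambda>t. V.sweedler_iter 3 z (\<lambda>s.
      mult_rhs [s!0, s!1, s!2] [t!0, t!1, t!2] * p (\<gamma> (s!3)) (t!3)))"
    by (intro V.sweedler_iter_cong V.sweedler_iter_flatten)
      (auto simp: V.multilinear_simps mult_rhs_def linearity_simps hs)
  finally show ?thesis by (simp add: mult_rhs_def)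
qed

(* The commutation relation for m = \<gamma> z: after expanding both coproducts, the factor
   <S\<^sup>-\<^sup>1 \<gamma>(z_(3)), y_(3)> <\<gamma>(z_(4)), y_(4)> collapses to counits by pairing_inv_antipode_gamma. *)

lemma gamma_commutation:
  assumes h: "lin_fun smU h"
  shows "V.sweedler y (\<lambda>y1 y2. V.sweedler z (\<lambda>z1 z2. h (\<gamma> y1 * \<gamma> z1) * p (\<gamma> z2) y2)) =
         V.sweedler y (\<lambda>y1 y2. V.sweedler z (\<lambda>z1 z2. p (\<gamma> z1) y1 * h (\<gamma> z2 * \<gamma> y2)))"
proof -
  note hs = lin_fun_add[OF h] lin_fun_scale[OF h]
  have "V.sweedler y (\<lambda>y1 y2. V.sweedler z (\<lambda>z1 z2. h (\<gamma> y1 * \<gamma> z1) * p (\<gamma> z2) y2)) =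
    V.sweedler_iter 2 y (\<lambda>t. V.sweedler (t!2) (\<lambda>c d. V.sweedler_iter 3 z (\<lambda>s.
      p (inv SU (\<gamma> (s!2))) c * p (\<gamma> (s!0)) (t!0) * h (\<gamma> (s!1) * \<gamma> (t!1)) * p (\<gamma> (s!3)) d)))"
    unfolding gamma_commutation_expanded[OF h]
    by (rule V.sweedler_iter_split[where i=2 and n=2 and m=3, symmetric])
      (auto simp: V.multilinear_simps linearity_simps hs)
  also have "\<dots> = V.sweedler_iter 2 y (\<lambda>t. V.sweedler (t!2) (\<lambda>c d. V.sweedler_iter 2 z (\<lambda>s.
      V.sweedler (s!2) (\<lambda>f e.
      p (inv SU (\<gamma> f)) c * p (\<gamma> (s!0)) (t!0) * h (\<gamma> (s!1) * \<gamma> (t!1)) * p (\<gamma> e) d))))"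
    by (intro V.sweedler_iter_cong arg_cong[where f = "V.sweedler _"] ext
      V.sweedler_iter_split[where i=2 and n=2 and m=3, symmetric])
      (auto simp: V.multilinear_simps linearity_simps hs)
  also have "\<dots> = V.sweedler_iter 2 y (\<lambda>t. V.sweedler_iter 2 z (\<lambda>s.
      V.sweedler (t!2) (\<lambda>c d. V.sweedler (s!2) (\<lambda>f e. p (inv SU (\<gamma> f)) c * p (\<gamma> e) d)) *
      (p (\<gamma> (s!0)) (t!0) * h (\<gamma> (s!1) * \<gamma> (t!1)))))"
    by (intro V.sweedler_iter_cong) (simp add: V.sweedler_iter_sweedler_swap[symmetric]
        V.sweedler_const_mult[symmetric] V.sweedler_mult_const[symmetric] mult_ac)
  also have "\<dots> = V.sweedler_iter 2 y (\<lambda>t. V.sweedler_iter 2 z (\<lambda>s.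
      p (\<gamma> (s!0)) (t!0) * h (\<gamma> (s!1) * \<gamma> (t!1)) * \<epsilon>V (t!2) * \<epsilon>V (s!2)))"
    by (simp only: pairing_inv_antipode_gamma) (simp add: mult_ac)
  also have "\<dots> = V.sweedler_iter 2 y (\<lambda>t. V.sweedler_iter 1 z (\<lambda>s.
      p (\<gamma> (s!0)) (t!0) * h (\<gamma> (s!1) * \<gamma> (t!1)) * \<epsilon>V (t!2)))"
    by (intro V.sweedler_iter_cong V.sweedler_iter_counit_right[where i=1 and n=1 and m=2])
      (auto simp: V.multilinear_simps linearity_simps hs)
  also have "\<dots> = V.sweedler_iter 1 y (\<lambda>t. V.sweedler_iter 1 z (\<lambda>s.
      p (\<gamma> (s!0)) (t!0) * h (\<gamma> (s!1) * \<gamma> (t!1))))"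
    by (rule V.sweedler_iter_counit_right[where i=1 and n=1 and m=2])
      (auto simp: V.multilinear_simps linearity_simps hs V.sweedler_iter_mult_const[symmetric])
  finally show ?thesis by (simp add: V.sweedler_iter_Suc V.sweedler_iter_0)
qed

definition theta :: "'v \<Rightarrow> 'k" where
  "theta x = V.sweedler x (\<lambda>a b. p (\<gamma> a) (SV b))"

definition theta_inv :: "'v \<Rightarrow> 'k" where
  "theta_inv x = V.sweedler x (\<lambda>a b. p (\<gamma> (SV (SV a))) b)"

definition upsilon :: "'v \<Rightarrow> 'k" where
  "upsilon x = V.sweedler x (\<lambda>a b. p (\<gamma> b) (SV a))"

definition upsilon_inv :: "'v \<Rightarrow> 'k" where
  "upsilon_inv x = V.sweedler x (\<lambda>a b. p (\<gamma> (SV (SV b))) a)"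

lemma lin_fun_theta: "lin_fun smV theta"
  and lin_fun_theta_inv: "lin_fun smV theta_inv"
  and lin_fun_upsilon: "lin_fun smV upsilon"
  and lin_fun_upsilon_inv: "lin_fun smV upsilon_inv"
  unfolding theta_def[abs_def] theta_inv_def[abs_def] upsilon_def[abs_def] upsilon_inv_def[abs_def]
  by (simp_all add: V.lin_fun_sweedler linearity_simps)

lemmas theta_simps = lin_fun_add[OF lin_fun_theta] lin_fun_scale[OF lin_fun_theta]
  lin_fun_add[OF lin_fun_theta_inv] lin_fun_scale[OF lin_fun_theta_inv]
  lin_fun_add[OF lin_fun_upsilon] lin_fun_scale[OF lin_fun_upsilon]
  lin_fun_add[OF lin_fun_upsilon_inv] lin_fun_scale[OF lin_fun_upsilon_inv]

lemma pairing_gamma_mult_right: "p (\<gamma> z) (u * v) = V.sweedler z (\<lambda>a b. p (\<gamma> b) u * p (\<gamma> a) v)"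
  by (simp add: pairing_mult_right sweedler_gamma linearity_simps)

lemma gamma_theta_exchange:
  assumes h: "lin_fun smU h"
  shows "V.sweedler x (\<lambda>a b. h (\<gamma> a) * theta b) = V.sweedler x (\<lambda>a b. theta a * h (\<gamma> (SV (SV b))))"
proof -
  note hs = lin_fun_add[OF h] lin_fun_scale[OF h]
  have "V.sweedler x (\<lambda>a b. h (\<gamma> a) * theta b) = V.sweedler_iter 1 x (\<lambda>t. h (\<gamma> (t!0)) * theta (t!1))"
    by (simp add: V.sweedler_iter_1 V.sweedler_iter_Suc V.sweedler_iter_0)
  also have "\<dots> = V.sweedler_iter 2 x (\<lambda>t. h (\<gamma> (t!0)) * p (\<gamma> (t!1)) (SV (t!2)))"
    by (rule V.sweedler_iter_split[where i=1 and n=1 and m=2])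
      (auto simp: V.multilinear_simps linearity_simps hs theta_def)
  also have "\<dots> = V.sweedler_iter 3 x (\<lambda>t. h (\<gamma> (t!0)) * p (\<gamma> (t!1)) (SV (t!2)) * \<epsilon>V (t!3))"
    by (rule V.sweedler_iter_counit_right[where i=2 and n=2 and m=3, symmetric])
      (auto simp: V.multilinear_simps linearity_simps hs)
  also have "\<dots> = V.sweedler_iter 4 x (\<lambda>t.
      h (\<gamma> (SV (SV (t!4))) * \<gamma> (SV (t!3)) * \<gamma> (t!0)) * p (\<gamma> (t!1)) (SV (t!2)))"
    by (rule V.sweedler_iter_antipode_right[where i=3 and n=3 and m=4
          and K="\<lambda>l. h (\<gamma> (SV (l!3)) * \<gamma> (l!0)) * p (\<gamma> (l!1)) (SV (l!2))", symmetric])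
      (auto simp: V.multilinear_simps linearity_simps hs V.antipode_mult gamma_mult V.antipode_one gamma_one)
  also have "\<dots> = V.sweedler_iter 3 x (\<lambda>t. V.sweedler (t!0) (\<lambda>a b.
      h (\<gamma> (SV (SV (t!3))) * \<gamma> (SV (t!2)) * \<gamma> a) * p (\<gamma> b) (SV (t!1))))"
    by (rule V.sweedler_iter_split[where i=0 and n=3 and m=4, symmetric])
      (auto simp: V.multilinear_simps linearity_simps hs)
  also have "\<dots> = V.sweedler_iter 2 x (\<lambda>t. V.sweedler (t!1) (\<lambda>c d. V.sweedler (t!0) (\<lambda>a b.
      h (\<gamma> (SV (SV (t!2))) * \<gamma> (SV d) * \<gamma> a) * p (\<gamma> b) (SV c))))"
    by (rule V.sweedler_iter_split[where i=1 and n=2 and m=3, symmetric])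
      (auto simp: V.multilinear_simps linearity_simps hs)
  also have "\<dots> = V.sweedler_iter 2 x (\<lambda>t. V.sweedler (SV (t!1)) (\<lambda>y1 y2. V.sweedler (t!0) (\<lambda>z1 z2.
      h (\<gamma> (SV (SV (t!2))) * (\<gamma> y1 * \<gamma> z1)) * p (\<gamma> z2) y2)))"
    by (intro V.sweedler_iter_cong) (simp add: V.sweedler_antipode mult.assoc linearity_simps hs)
  also have "\<dots> = V.sweedler_iter 2 x (\<lambda>t. V.sweedler (SV (t!1)) (\<lambda>y1 y2. V.sweedler (t!0) (\<lambda>z1 z2.
      p (\<gamma> z1) y1 * h (\<gamma> (SV (SV (t!2))) * (\<gamma> z2 * \<gamma> y2)))))"
    by (intro V.sweedler_iter_cong gamma_commutation) (simp add: linearity_simps hs)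
  also have "\<dots> = V.sweedler_iter 2 x (\<lambda>t. V.sweedler (t!1) (\<lambda>c d. V.sweedler (t!0) (\<lambda>a b.
      p (\<gamma> a) (SV d) * h (\<gamma> (SV (SV (t!2))) * (\<gamma> b * \<gamma> (SV c))))))"
    by (intro V.sweedler_iter_cong) (simp add: V.sweedler_antipode linearity_simps hs)
  also have "\<dots> = V.sweedler_iter 3 x (\<lambda>t. V.sweedler (t!0) (\<lambda>a b.
      p (\<gamma> a) (SV (t!2)) * h (\<gamma> (SV (SV (t!3))) * (\<gamma> b * \<gamma> (SV (t!1))))))"
    by (rule V.sweedler_iter_split[where i=1 and n=2 and m=3])
      (auto simp: V.multilinear_simps linearity_simps hs)
  also have "\<dots> = V.sweedler_iter 4 x (\<lambda>t.
      p (\<gamma> (t!0)) (SV (t!3)) * h (\<gamma> (SV (SV (t!4))) * (\<gamma> (t!1) * \<gamma> (SV (t!2)))))"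
    by (rule V.sweedler_iter_split[where i=0 and n=3 and m=4])
      (auto simp: V.multilinear_simps linearity_simps hs)
  also have "\<dots> = V.sweedler_iter 3 x (\<lambda>t. \<epsilon>V (t!1) * (p (\<gamma> (t!0)) (SV (t!2)) * h (\<gamma> (SV (SV (t!3))))))"
    by (rule V.sweedler_iter_antipode_right[where i=1 and n=3 and m=4
          and K="\<lambda>l. p (\<gamma> (l!0)) (SV (l!2)) * h (\<gamma> (SV (SV (l!3))) * \<gamma> (l!1))"])
      (auto simp: V.multilinear_simps linearity_simps hs gamma_mult gamma_one)
  also have "\<dots> = V.sweedler_iter 2 x (\<lambda>t. p (\<gamma> (t!0)) (SV (t!1)) * h (\<gamma> (SV (SV (t!2)))))"
    by (rule V.sweedler_iter_counit_left[where i=1 and n=2 and m=3])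
      (auto simp: V.multilinear_simps linearity_simps hs)
  also have "\<dots> = V.sweedler_iter 1 x (\<lambda>t. theta (t!0) * h (\<gamma> (SV (SV (t!1)))))"
    by (rule V.sweedler_iter_split[where i=0 and n=1 and m=2, symmetric])
      (auto simp: V.multilinear_simps linearity_simps hs theta_def V.sweedler_mult_const[symmetric])
  also have "\<dots> = V.sweedler x (\<lambda>a b. theta a * h (\<gamma> (SV (SV b))))"
    by (simp add: V.sweedler_iter_1 V.sweedler_iter_Suc V.sweedler_iter_0)
  finally show ?thesis .
qed

lemma gamma_upsilon_exchange:
  assumes h: "lin_fun smU h"
  shows "V.sweedler x (\<lambda>a b. h (\<gamma> (SV (SV a))) * upsilon b) = V.sweedler x (\<lambda>a b. upsilon a * h (\<gamma> b))"
proof -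
  note hs = lin_fun_add[OF h] lin_fun_scale[OF h]
  have "V.sweedler x (\<lambda>a b. h (\<gamma> (SV (SV a))) * upsilon b) = V.sweedler_iter 1 x (\<lambda>t.
      h (\<gamma> (SV (SV (t!0)))) * upsilon (t!1))"
    by (simp add: V.sweedler_iter_1 V.sweedler_iter_Suc V.sweedler_iter_0)
  also have "\<dots> = V.sweedler_iter 2 x (\<lambda>t. h (\<gamma> (SV (SV (t!0)))) * p (\<gamma> (t!2)) (SV (t!1)))"
    by (rule V.sweedler_iter_split[where i=1 and n=1 and m=2])
      (auto simp: V.multilinear_simps linearity_simps hs upsilon_def)
  also have "\<dots> = V.sweedler_iter 3 x (\<lambda>t. \<epsilon>V (t!2) * (h (\<gamma> (SV (SV (t!0)))) * p (\<gamma> (t!3)) (SV (t!1))))"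
    by (rule V.sweedler_iter_counit_left[where i=2 and n=2 and m=3, symmetric])
      (auto simp: V.multilinear_simps linearity_simps hs)
  also have "\<dots> = V.sweedler_iter 4 x (\<lambda>t.
      h (\<gamma> (SV (t!2)) * \<gamma> (t!3) * \<gamma> (SV (SV (t!0)))) * p (\<gamma> (t!4)) (SV (t!1)))"
    by (rule V.sweedler_iter_antipode_left[where i=2 and n=3 and m=4
          and K="\<lambda>l. h (\<gamma> (l!2) * \<gamma> (SV (SV (l!0)))) * p (\<gamma> (l!3)) (SV (l!1))", symmetric])
      (auto simp: V.multilinear_simps linearity_simps hs gamma_mult gamma_one)
  also have "\<dots> = V.sweedler_iter 3 x (\<lambda>t. V.sweedler (t!3) (\<lambda>a b.
      h (\<gamma> (SV (t!2)) * \<gamma> a * \<gamma> (SV (SV (t!0)))) * p (\<gamma> b) (SV (t!1))))"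
    by (rule V.sweedler_iter_split[where i=3 and n=3 and m=4, symmetric])
      (auto simp: V.multilinear_simps linearity_simps hs)
  also have "\<dots> = V.sweedler_iter 2 x (\<lambda>t. V.sweedler (t!1) (\<lambda>c d. V.sweedler (t!2) (\<lambda>a b.
      h (\<gamma> (SV d) * \<gamma> a * \<gamma> (SV (SV (t!0)))) * p (\<gamma> b) (SV c))))"
    by (rule V.sweedler_iter_split[where i=1 and n=2 and m=3, symmetric])
      (auto simp: V.multilinear_simps linearity_simps hs)
  also have "\<dots> = V.sweedler_iter 2 x (\<lambda>t. V.sweedler (SV (t!1)) (\<lambda>y1 y2. V.sweedler (t!2) (\<lambda>z1 z2.
      h ((\<gamma> y1 * \<gamma> z1) * \<gamma> (SV (SV (t!0)))) * p (\<gamma> z2) y2)))"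
    by (intro V.sweedler_iter_cong) (simp add: V.sweedler_antipode linearity_simps hs)
  also have "\<dots> = V.sweedler_iter 2 x (\<lambda>t. V.sweedler (SV (t!1)) (\<lambda>y1 y2. V.sweedler (t!2) (\<lambda>z1 z2.
      p (\<gamma> z1) y1 * h ((\<gamma> z2 * \<gamma> y2) * \<gamma> (SV (SV (t!0)))))))"
    by (intro V.sweedler_iter_cong gamma_commutation) (simp add: linearity_simps hs)
  also have "\<dots> = V.sweedler_iter 2 x (\<lambda>t. V.sweedler (t!1) (\<lambda>c d. V.sweedler (t!2) (\<lambda>a b.
      p (\<gamma> a) (SV d) * h ((\<gamma> b * \<gamma> (SV c)) * \<gamma> (SV (SV (t!0)))))))"
    by (intro V.sweedler_iter_cong) (simp add: V.sweedler_antipode linearity_simps hs)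
  also have "\<dots> = V.sweedler_iter 3 x (\<lambda>t. V.sweedler (t!3) (\<lambda>a b.
      p (\<gamma> a) (SV (t!2)) * h ((\<gamma> b * \<gamma> (SV (t!1))) * \<gamma> (SV (SV (t!0))))))"
    by (rule V.sweedler_iter_split[where i=1 and n=2 and m=3])
      (auto simp: V.multilinear_simps linearity_simps hs)
  also have "\<dots> = V.sweedler_iter 4 x (\<lambda>t.
      p (\<gamma> (t!3)) (SV (t!2)) * h ((\<gamma> (t!4) * \<gamma> (SV (t!1))) * \<gamma> (SV (SV (t!0)))))"
    by (rule V.sweedler_iter_split[where i=3 and n=3 and m=4])
      (auto simp: V.multilinear_simps linearity_simps hs)
  also have "\<dots> = V.sweedler_iter 3 x (\<lambda>t. \<epsilon>V (t!0) * (p (\<gamma> (t!2)) (SV (t!1)) * h (\<gamma> (t!3))))"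
    by (rule V.sweedler_iter_antipode_left[where i=0 and n=3 and m=4
          and K="\<lambda>l. p (\<gamma> (l!2)) (SV (l!1)) * h (\<gamma> (l!3) * \<gamma> (SV (l!0)))"])
      (auto simp: V.multilinear_simps linearity_simps hs gamma_mult gamma_one V.antipode_mult V.antipode_one)
  also have "\<dots> = V.sweedler_iter 2 x (\<lambda>t. p (\<gamma> (t!1)) (SV (t!0)) * h (\<gamma> (t!2)))"
    by (rule V.sweedler_iter_counit_left[where i=0 and n=2 and m=3])
      (auto simp: V.multilinear_simps linearity_simps hs)
  also have "\<dots> = V.sweedler_iter 1 x (\<lambda>t. upsilon (t!0) * h (\<gamma> (t!1)))"
    by (rule V.sweedler_iter_split[where i=0 and n=1 and m=2, symmetric])
      (auto simp: V.multilinear_simps linearity_simps hs upsilon_def V.sweedler_mult_const[symmetric])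
  also have "\<dots> = V.sweedler x (\<lambda>a b. upsilon a * h (\<gamma> b))"
    by (simp add: V.sweedler_iter_1 V.sweedler_iter_Suc V.sweedler_iter_0)
  finally show ?thesis .
qed

lemma conv_theta_theta_inv: "conv \<Delta>V theta theta_inv = \<epsilon>V"
proof
  fix x
  have "conv \<Delta>V theta theta_inv x = V.sweedler_iter 1 x (\<lambda>t. theta (t!0) * theta_inv (t!1))"
    by (simp add: V.conv_eq_sweedler V.sweedler_iter_Suc V.sweedler_iter_0)
  also have "\<dots> = V.sweedler_iter 2 x (\<lambda>t. theta (t!0) * p (\<gamma> (SV (SV (t!1)))) (t!2))"
    by (rule V.sweedler_iter_split[where i=1 and n=1 and m=2])
      (auto simp: V.multilinear_simps linearity_simps theta_simps theta_inv_def)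
  also have "\<dots> = V.sweedler_iter 1 x (\<lambda>t. V.sweedler (t!0) (\<lambda>a b. theta a * p (\<gamma> (SV (SV b))) (t!1)))"
    by (rule V.sweedler_iter_split[where i=0 and n=1 and m=2, symmetric])
      (auto simp: V.multilinear_simps linearity_simps theta_simps)
  also have "\<dots> = V.sweedler_iter 1 x (\<lambda>t. V.sweedler (t!0) (\<lambda>a b. p (\<gamma> a) (t!1) * theta b))"
    by (rule V.sweedler_iter_cong) (rule gamma_theta_exchange[OF lin_fun_pairing_left, symmetric])
  also have "\<dots> = V.sweedler_iter 2 x (\<lambda>t. p (\<gamma> (t!0)) (t!2) * theta (t!1))"
    by (rule V.sweedler_iter_split[where i=0 and n=1 and m=2])
      (auto simp: V.multilinear_simps linearity_simps theta_simps)
  also have "\<dots> = V.sweedler_iter 3 x (\<lambda>t. p (\<gamma> (t!0)) (t!3) * p (\<gamma> (t!1)) (SV (t!2)))"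
    by (rule V.sweedler_iter_split[where i=1 and n=2 and m=3])
      (auto simp: V.multilinear_simps linearity_simps theta_def)
  also have "\<dots> = V.sweedler_iter 2 x (\<lambda>t. p (\<gamma> (t!0)) (SV (t!1) * t!2))"
    by (rule V.sweedler_iter_split[where i=0 and n=2 and m=3, symmetric])
      (auto simp: V.multilinear_simps linearity_simps pairing_gamma_mult_right mult.commute)
  also have "\<dots> = V.sweedler_iter 1 x (\<lambda>t. \<epsilon>V (t!1) * p (\<gamma> (t!0)) 1)"
    by (rule V.sweedler_iter_antipode_left[where i=1 and n=1 and m=2
          and K="\<lambda>l. p (\<gamma> (l!0)) (l!1)"])
      (auto simp: V.multilinear_simps linearity_simps)
  also have "\<dots> = V.sweedler_iter 0 x (\<lambda>l. p (\<gamma> (l!0)) 1)"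
    by (rule V.sweedler_iter_counit_right[where i=0 and n=0 and m=1])
      (auto simp: V.multilinear_simps linearity_simps)
  also have "\<dots> = \<epsilon>V x" by (simp add: V.sweedler_iter_0 pairing_one_right counit_gamma)
  finally show "conv \<Delta>V theta theta_inv x = \<epsilon>V x" .
qed

lemma conv_upsilon_inv_upsilon: "conv \<Delta>V upsilon_inv upsilon = \<epsilon>V"
proof
  fix x
  have "conv \<Delta>V upsilon_inv upsilon x = V.sweedler_iter 1 x (\<lambda>t. upsilon_inv (t!0) * upsilon (t!1))"
    by (simp add: V.conv_eq_sweedler V.sweedler_iter_Suc V.sweedler_iter_0)
  also have "\<dots> = V.sweedler_iter 2 x (\<lambda>t. p (\<gamma> (SV (SV (t!1)))) (t!0) * upsilon (t!2))"
    by (rule V.sweedler_iter_split[where i=0 and n=1 and m=2])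
      (auto simp: V.multilinear_simps linearity_simps theta_simps upsilon_inv_def V.sweedler_mult_const[symmetric])
  also have "\<dots> = V.sweedler_iter 1 x (\<lambda>t. V.sweedler (t!1) (\<lambda>a b. p (\<gamma> (SV (SV a))) (t!0) * upsilon b))"
    by (rule V.sweedler_iter_split[where i=1 and n=1 and m=2, symmetric])
      (auto simp: V.multilinear_simps linearity_simps theta_simps)
  also have "\<dots> = V.sweedler_iter 1 x (\<lambda>t. V.sweedler (t!1) (\<lambda>a b. upsilon a * p (\<gamma> b) (t!0)))"
    by (rule V.sweedler_iter_cong) (rule gamma_upsilon_exchange[OF lin_fun_pairing_left])
  also have "\<dots> = V.sweedler_iter 2 x (\<lambda>t. upsilon (t!1) * p (\<gamma> (t!2)) (t!0))"
    by (rule V.sweedler_iter_split[where i=1 and n=1 and m=2])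
      (auto simp: V.multilinear_simps linearity_simps theta_simps)
  also have "\<dots> = V.sweedler_iter 3 x (\<lambda>t. p (\<gamma> (t!2)) (SV (t!1)) * p (\<gamma> (t!3)) (t!0))"
    by (rule V.sweedler_iter_split[where i=1 and n=2 and m=3])
      (auto simp: V.multilinear_simps linearity_simps upsilon_def V.sweedler_mult_const[symmetric])
  also have "\<dots> = V.sweedler_iter 2 x (\<lambda>t. p (\<gamma> (t!2)) (t!0 * SV (t!1)))"
    by (rule V.sweedler_iter_split[where i=2 and n=2 and m=3, symmetric])
      (auto simp: V.multilinear_simps linearity_simps pairing_gamma_mult_right mult.commute)
  also have "\<dots> = V.sweedler_iter 1 x (\<lambda>t. \<epsilon>V (t!0) * p (\<gamma> (t!1)) 1)"
    by (rule V.sweedler_iter_antipode_right[where i=0 and n=1 and m=2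
          and K="\<lambda>l. p (\<gamma> (l!1)) (l!0)"])
      (auto simp: V.multilinear_simps linearity_simps)
  also have "\<dots> = V.sweedler_iter 0 x (\<lambda>l. p (\<gamma> (l!0)) 1)"
    by (rule V.sweedler_iter_counit_left[where i=0 and n=0 and m=1])
      (auto simp: V.multilinear_simps linearity_simps)
  also have "\<dots> = \<epsilon>V x" by (simp add: V.sweedler_iter_0 pairing_one_right counit_gamma)
  finally show "conv \<Delta>V upsilon_inv upsilon x = \<epsilon>V x" .
qed

lemma conv_theta_inv_theta: "conv \<Delta>V theta_inv theta = \<epsilon>V"
  by (rule V.conv_left_inverse_imp_right[OF lin_fun_theta lin_fun_theta_inv conv_theta_theta_inv])

lemma conv_upsilon_upsilon_inv: "conv \<Delta>V upsilon upsilon_inv = \<epsilon>V"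
  by (rule V.conv_left_inverse_imp_right[OF lin_fun_upsilon_inv lin_fun_upsilon conv_upsilon_inv_upsilon])

lemma gamma_antipode_squared_theta:
  "\<gamma> (SV (SV x)) = sum_list (map (\<lambda>(a, b, c). smU (theta_inv a * theta c) (\<gamma> b)) (delta3 \<Delta>V x))"
  (is "_ = ?rhs")
proof (rule U.lin_fun_separating[symmetric])
  fix h assume h: "lin_fun smU h"
  note hs = lin_fun_add[OF h] lin_fun_scale[OF h]
  have "h ?rhs =
        sum_list (map (\<lambda>(a, b, c). theta_inv a * theta c * h (\<gamma> b)) (delta3 \<Delta>V x))"
    by (simp add: lin_fun_sum_list[OF h] case_prod_unfold hs)
  also have "\<dots> = V.sweedler_iter 2 x (\<lambda>t. theta_inv (t!0) * theta (t!2) * h (\<gamma> (t!1)))"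
    by (rule V.sum_list_delta3)
  also have "\<dots> = V.sweedler_iter 1 x (\<lambda>t. theta_inv (t!0) * V.sweedler (t!1) (\<lambda>a b. h (\<gamma> a) * theta b))"
    by (rule V.sweedler_iter_split[where i=1 and n=1 and m=2, symmetric])
      (auto simp: V.multilinear_simps linearity_simps theta_simps hs V.sweedler_const_mult[symmetric] mult_ac)
  also have "\<dots> = V.sweedler_iter 1 x (\<lambda>t. theta_inv (t!0) * V.sweedler (t!1) (\<lambda>a b.
      theta a * h (\<gamma> (SV (SV b)))))"
    by (simp add: gamma_theta_exchange[OF h])
  also have "\<dots> = V.sweedler_iter 2 x (\<lambda>t. theta_inv (t!0) * theta (t!1) * h (\<gamma> (SV (SV (t!2)))))"
    by (rule V.sweedler_iter_split[where i=1 and n=1 and m=2])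
      (auto simp: V.multilinear_simps linearity_simps theta_simps hs V.sweedler_const_mult[symmetric])
  also have "\<dots> = V.sweedler_iter 1 x (\<lambda>t. V.sweedler (t!0) (\<lambda>a b.
      theta_inv a * theta b) * h (\<gamma> (SV (SV (t!1)))))"
    by (rule V.sweedler_iter_split[where i=0 and n=1 and m=2, symmetric])
      (auto simp: V.multilinear_simps linearity_simps theta_simps hs V.sweedler_mult_const[symmetric])
  also have "\<dots> = V.sweedler_iter 1 x (\<lambda>t. \<epsilon>V (t!0) * h (\<gamma> (SV (SV (t!1)))))"
    by (simp add: conv_theta_inv_theta[THEN fun_cong, unfolded V.conv_eq_sweedler])
  also have "\<dots> = V.sweedler_iter 0 x (\<lambda>l. h (\<gamma> (SV (SV (l!0)))))"
    by (rule V.sweedler_iter_counit_left[where i=0 and n=0 and m=1])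
      (auto simp: V.multilinear_simps linearity_simps hs)
  also have "\<dots> = h (\<gamma> (SV (SV x)))" by (simp add: V.sweedler_iter_0)
  finally show "h ?rhs = h (\<gamma> (SV (SV x)))" .
qed

lemma gamma_antipode_squared_upsilon:
  "\<gamma> (SV (SV x)) = sum_list (map (\<lambda>(a, b, c). smU (upsilon a * upsilon_inv c) (\<gamma> b)) (delta3 \<Delta>V x))"
  (is "_ = ?rhs")
proof (rule U.lin_fun_separating[symmetric])
  fix h assume h: "lin_fun smU h"
  note hs = lin_fun_add[OF h] lin_fun_scale[OF h]
  have "h ?rhs =
        sum_list (map (\<lambda>(a, b, c). upsilon a * upsilon_inv c * h (\<gamma> b)) (delta3 \<Delta>V x))"
    by (simp add: lin_fun_sum_list[OF h] case_prod_unfold hs)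
  also have "\<dots> = V.sweedler_iter 2 x (\<lambda>t. upsilon (t!0) * upsilon_inv (t!2) * h (\<gamma> (t!1)))"
    by (rule V.sum_list_delta3)
  also have "\<dots> = V.sweedler_iter 1 x (\<lambda>t. V.sweedler (t!0) (\<lambda>a b.
      upsilon a * h (\<gamma> b)) * upsilon_inv (t!1))"
    by (rule V.sweedler_iter_split[where i=0 and n=1 and m=2, symmetric])
      (auto simp: V.multilinear_simps linearity_simps theta_simps hs V.sweedler_const_mult[symmetric] mult_ac)
  also have "\<dots> = V.sweedler_iter 1 x (\<lambda>t. V.sweedler (t!0) (\<lambda>a b.
      h (\<gamma> (SV (SV a))) * upsilon b) * upsilon_inv (t!1))"
    by (simp add: gamma_upsilon_exchange[OF h])
  also have "\<dots> = V.sweedler_iter 2 x (\<lambda>t. h (\<gamma> (SV (SV (t!0)))) * upsilon (t!1) * upsilon_inv (t!2))"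
    by (rule V.sweedler_iter_split[where i=0 and n=1 and m=2])
      (auto simp: V.multilinear_simps linearity_simps theta_simps hs V.sweedler_mult_const[symmetric])
  also have "\<dots> = V.sweedler_iter 1 x (\<lambda>t. h (\<gamma> (SV (SV (t!0)))) * V.sweedler (t!1) (\<lambda>a b.
      upsilon a * upsilon_inv b))"
    by (rule V.sweedler_iter_split[where i=1 and n=1 and m=2, symmetric])
      (auto simp: V.multilinear_simps linearity_simps theta_simps hs)
  also have "\<dots> = V.sweedler_iter 1 x (\<lambda>t. h (\<gamma> (SV (SV (t!0)))) * \<epsilon>V (t!1))"
    by (simp add: conv_upsilon_upsilon_inv[THEN fun_cong, unfolded V.conv_eq_sweedler])
  also have "\<dots> = V.sweedler_iter 0 x (\<lambda>l. h (\<gamma> (SV (SV (l!0)))))"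
    by (rule V.sweedler_iter_counit_right[where i=0 and n=0 and m=1])
      (auto simp: V.multilinear_simps linearity_simps hs)
  also have "\<dots> = h (\<gamma> (SV (SV x)))" by (simp add: V.sweedler_iter_0)
  finally show "h ?rhs = h (\<gamma> (SV (SV x)))" .
qed

end

theorem mainTheorem4:
  fixes smU :: "'k::field \<Rightarrow> 'u::ring_1 \<Rightarrow> 'u" and \<Delta>U :: "'u \<Rightarrow> ('u \<times> 'u) list"
    and \<epsilon>U :: "'u \<Rightarrow> 'k" and SU :: "'u \<Rightarrow> 'u"
    and smV :: "'k \<Rightarrow> 'v::ring_1 \<Rightarrow> 'v" and \<Delta>V :: "'v \<Rightarrow> ('v \<times> 'v) list"
    and \<epsilon>V :: "'v \<Rightarrow> 'k" and SV :: "'v \<Rightarrow> 'v"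
    and p :: "'u \<Rightarrow> 'v \<Rightarrow> 'k" and \<gamma> :: "'v \<Rightarrow> 'u"
  assumes U: "hopf_algebra smU \<Delta>U \<epsilon>U SU" and bijU: "bij SU"
    and V: "hopf_algebra smV \<Delta>V \<epsilon>V SV" and bijV: "bij SV"
    and P: "hopf_pairing smU \<Delta>U \<epsilon>U smV \<Delta>V \<epsilon>V p"
    and G: "hopf_map_cop smU \<Delta>U \<epsilon>U smV \<Delta>V \<epsilon>V \<gamma>"
    and comm: "\<And>y m. \<gamma> y * m =
       sum_list (map (\<lambda>(m1, m2, m3). sum_list (map (\<lambda>(y1, y2, y3).
          smU (p (inv SU m1) y3 * p m3 y1) (m2 * \<gamma> y2)) (delta3 \<Delta>V y))) (delta3 \<Delta>U m))"
  shows
    "(let \<theta> = (\<lambda>x. sum_list (map (\<lambda>(a, b). p (\<gamma> a) (SV b)) (\<Delta>V x)));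
          \<theta>i = (\<lambda>x. sum_list (map (\<lambda>(a, b). p (\<gamma> (SV (SV a))) b) (\<Delta>V x)))
      in conv \<Delta>V \<theta> \<theta>i = \<epsilon>V \<and> conv \<Delta>V \<theta>i \<theta> = \<epsilon>V \<and>
         (\<forall>x. \<gamma> (SV (SV x)) =
            sum_list (map (\<lambda>(a, b, c). smU (\<theta>i a * \<theta> c) (\<gamma> b)) (delta3 \<Delta>V x))))
   \<and> (let \<upsilon> = (\<lambda>x. sum_list (map (\<lambda>(a, b). p (\<gamma> b) (SV a)) (\<Delta>V x)));
          \<upsilon>i = (\<lambda>x. sum_list (map (\<lambda>(a, b). p (\<gamma> (SV (SV b))) a) (\<Delta>V x)))
      in conv \<Delta>V \<upsilon> \<upsilon>i = \<epsilon>V \<and> conv \<Delta>V \<upsilon>i \<upsilon> = \<epsilon>V \<and>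
         (\<forall>x. \<gamma> (SV (SV x)) =
            sum_list (map (\<lambda>(a, b, c). smU (\<upsilon> a * \<upsilon>i c) (\<gamma> b)) (delta3 \<Delta>V x))))"
proof -
  interpret paired_hopf_map smU \<Delta>U \<epsilon>U SU smV \<Delta>V \<epsilon>V SV p \<gamma>
    by unfold_locales (fact U V bijU bijV P G comm)+
  have "(\<lambda>x. sum_list (map (\<lambda>(a, b). p (\<gamma> a) (SV b)) (\<Delta>V x))) = theta"
    and "(\<lambda>x. sum_list (map (\<lambda>(a, b). p (\<gamma> (SV (SV a))) b) (\<Delta>V x))) = theta_inv"
    and "(\<lambda>x. sum_list (map (\<lambda>(a, b). p (\<gamma> b) (SV a)) (\<Delta>V x))) = upsilon"
    and "(\<lambda>x. sum_list (map (\<lambda>(a, b). p (\<gamma> (SV (SV b))) a) (\<Delta>V x))) = upsilon_inv"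
    by (simp_all add: fun_eq_iff theta_def theta_inv_def upsilon_def upsilon_inv_def V.sweedler_def)
  then show ?thesis
    using conv_theta_theta_inv conv_theta_inv_theta conv_upsilon_upsilon_inv conv_upsilon_inv_upsilon
      gamma_antipode_squared_theta gamma_antipode_squared_upsilon
    by (simp add: Let_def)
qed

end
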